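(* Let $n\ge3$ and $\lambda\ge1$ be integers and let $A,X,Y,a,x,y,z,H,J$ be as below. Then $(x,y,z)$ is a flag-regular triple for $A$, and $\mathbf Q_n^{(\lambda)}\cong\mathrm{Cos}(A,H,J)\cong\mathrm{Cos}(X,\langle a\rangle,\langle z\rangle)\cong\mathrm{Cos}(Y,\langle a\rangle,\langle zx\rangle)$, a graph of valency $n$ and edge-multiplicity $\lambda$.
   Context: $A=N\rtimes(\langle a\rangle\rtimes\langle x\rangle)$, where $N=\langle v_0,\dots,v_{n-1}\rangle\cong\mathbb Z_2^n$ is elementary abelian with basis $v_0,\dots,v_{n-1}$, $|a|=n\lambda$, $|x|=2$, $a^x=a^{-1}$, $v_i^a=v_{i+1}$ and $v_i^x=v_{n-i}$ (indices mod $n$). Let $z=v_0$, $y=ax$, $H=\langle x,y\rangle=\langle a\rangle\rtimes\langle x\rangle\cong D_{2n\lambda}$, $J=\langle x,z\rangle\cong\mathbb Z_2^2$, $X=N\rtimes\langle a\rangle=\langle a,z\rangle$, and $Y=(\langle v_0v_1,\dots,v_{n-2}v_{n-1}\rangle\rtimes\langle a\rangle)\rtimes\langle zx\rangle=\langle a,zx\rangle$. A flag-regular triple for a group $G$ is $(x,y,z)$, pairwise distinct involutions with $G=\langle x,y,z\rangle$, $xz=zx$, $z\notin\langle x,y\rangle$, $|xy|,|yz|$ finite. $\mathrm{Cos}(G,H,J)$: vertices the right cosets of $H$, edges the right cosets of $J$, $Hu$ incident with $Jv$ iff $vu^{-1}\in JH$. $\mathbf Q_n$ is the $n$-dimensional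 hypercube (vertices $\mathbb Z_2^n$, adjacent iff differing in exactly one coordinate) and $\mathbf Q_n^{(\lambda)}$ is obtained by replacing each edge by $\lambda$ parallel edges. *)

theory Defs
  imports "HOL-Algebra.Multiplicative_Group" "HOL-Algebra.Generated_Groups"
begin

record ('v, 'e) incgraph =
  verts :: "'v set"
  edges :: "'e set"
  inc   :: "'v \<Rightarrow> 'e \<Rightarrow> bool"

definition incgraph_iso :: "('v, 'e) incgraph \<Rightarrow> ('w, 'f) incgraph \<Rightarrow> bool" where
  "incgraph_iso G1 G2 \<longleftrightarrow>
     (\<exists>f g. bij_betw f (verts G1) (verts G2) \<and> bij_betw g (edges G1) (edges G2) \<and>
        (\<forall>v\<in>verts G1. \<forall>e\<in>edges G1. inc G1 v e \<longleftrightarrow> inc G2 (f v) (g e)))"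

definition ends :: "('v, 'e) incgraph \<Rightarrow> 'e \<Rightarrow> 'v set" where
  "ends G e = {v \<in> verts G. inc G v e}"

definition nbrs :: "('v, 'e) incgraph \<Rightarrow> 'v \<Rightarrow> 'v set" where
  "nbrs G u = {w \<in> verts G. w \<noteq> u \<and> (\<exists>e\<in>edges G. inc G u e \<and> inc G w e)}"

definition valency_multiplicity :: "('v, 'e) incgraph \<Rightarrow> nat \<Rightarrow> nat \<Rightarrow> bool" where
  "valency_multiplicity G k m \<longleftrightarrow>
     finite (verts G) \<and> finite (edges G) \<and>
     (\<forall>e\<in>edges G. card (ends G e) = 2) \<and>
     (\<forall>u\<in>verts G. card (nbrs G u) = k) \<and>
     (\<forall>u\<in>verts G. \<forall>w\<in>nbrs G u. card {e\<in>edges G. inc G u e \<and> inc G w e} = m)"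

definition cos_graph :: "('a, 'b) monoid_scheme \<Rightarrow> 'a set \<Rightarrow> 'a set \<Rightarrow> ('a set, 'a set) incgraph" where
  "cos_graph G H J =
     \<lparr> verts = rcosets\<^bsub>G\<^esub> H,
       edges = rcosets\<^bsub>G\<^esub> J,
       inc = (\<lambda>C D. \<exists>u\<in>carrier G. \<exists>v\<in>carrier G.
                C = H #>\<^bsub>G\<^esub> u \<and> D = J #>\<^bsub>G\<^esub> v \<and>
                v \<otimes>\<^bsub>G\<^esub> inv\<^bsub>G\<^esub> u \<in> J <#>\<^bsub>G\<^esub> H) \<rparr>"

text \<open>Q_n^(l): vertices Z_2^n (encoded as subsets of {0..<n}, i.e. supports of 0/1
  vectors); two vertices adjacent iff they differ in exactly one coordinate
  (symmetric difference of cardinality 1); each edge of Q_n replaced by l parallel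
  edges, labelled by j < l.\<close>
definition hypercube_mult :: "nat \<Rightarrow> nat \<Rightarrow> (nat set, nat set set \<times> nat) incgraph" where
  "hypercube_mult n l =
     \<lparr> verts = Pow {..<n},
       edges = {({S, T}, j) | S T j. S \<subseteq> {..<n} \<and> T \<subseteq> {..<n} \<and>
                                     card ((S - T) \<union> (T - S)) = 1 \<and> j < l},
       inc = (\<lambda>v e. v \<in> fst e) \<rparr>"

definition involution :: "('a, 'b) monoid_scheme \<Rightarrow> 'a \<Rightarrow> bool" where
  "involution G g \<longleftrightarrow> g \<in> carrier G \<and> g \<noteq> \<one>\<^bsub>G\<^esub> \<and> g \<otimes>\<^bsub>G\<^esub> g = \<one>\<^bsub>G\<^esub>"

text \<open>group.ord is 0 exactly for elements of infinite order.\<close>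
definition flag_regular_triple :: "('a, 'b) monoid_scheme \<Rightarrow> 'a \<Rightarrow> 'a \<Rightarrow> 'a \<Rightarrow> bool" where
  "flag_regular_triple G x y z \<longleftrightarrow>
     group G \<and> involution G x \<and> involution G y \<and> involution G z \<and>
     x \<noteq> y \<and> y \<noteq> z \<and> x \<noteq> z \<and>
     generate G {x, y, z} = carrier G \<and>
     x \<otimes>\<^bsub>G\<^esub> z = z \<otimes>\<^bsub>G\<^esub> x \<and>
     z \<notin> generate G {x, y} \<and>
     group.ord G (x \<otimes>\<^bsub>G\<^esub> y) \<noteq> 0 \<and> group.ord G (y \<otimes>\<^bsub>G\<^esub> z) \<noteq> 0"

text \<open>An element (k, e, S) stands for  a^k x^e \<cdot> \<Prod>_{i\<in>S} v_i,
  with 0 \<le> k < n*l, e a boolean (x^1 if e), and S \<subseteq> {0..<n}.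
  In the dihedral group <a> \<rtimes> <x>:  a^k1 x^e1 a^k2 x^e2 = a^(k1 \<plusminus> k2) x^(e1+e2).
  The right action of h = a^k x^e on the basis of N: v_i^(a^k x^e) = v_j where
  j = i+k (mod n) if e is false, j = -(i+k) (mod n) if e is true;
  this is the action v_i^a = v_(i+1), v_i^x = v_(n-i).
  Multiplication: (h1 n1)(h2 n2) = (h1 h2)(n1^h2 n2).\<close>

definition dih_mult :: "nat \<Rightarrow> nat \<Rightarrow> int \<times> bool \<Rightarrow> int \<times> bool \<Rightarrow> int \<times> bool" where
  "dih_mult n l h1 h2 =
     ((fst h1 + (if snd h1 then - fst h2 else fst h2)) mod (int n * int l), snd h1 \<noteq> snd h2)"

definition hact :: "nat \<Rightarrow> int \<times> bool \<Rightarrow> int \<Rightarrow> int" where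
  "hact n h i = (if snd h then - (i + fst h) else i + fst h) mod int n"

definition groupA :: "nat \<Rightarrow> nat \<Rightarrow> (int \<times> bool \<times> int set) monoid" where
  "groupA n l =
     \<lparr> carrier = {(k, e, S). 0 \<le> k \<and> k < int n * int l \<and> S \<subseteq> {0..<int n}},
       mult = (\<lambda>(k1, e1, S1) (k2, e2, S2).
                 let h = dih_mult n l (k1, e1) (k2, e2);
                     S = (hact n (k2, e2) ` S1 - S2) \<union> (S2 - hact n (k2, e2) ` S1)
                 in (fst h, snd h, S)),
       one = (0, False, {}) \<rparr>"

definition elem_a :: "nat \<Rightarrow> nat \<Rightarrow> int \<times> bool \<times> int set" where
  "elem_a n l = (1 mod (int n * int l), False, {})"

definition elem_x :: "int \<times> bool \<times> int set" where
  "elem_x = (0, True, {})"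

definition elem_z :: "int \<times> bool \<times> int set" where
  "elem_z = (0, False, {0})"

end

theory Submission
  imports Defs
begin

text \<open>Write an element of A as \<open>a\<^sup>k x\<^sup>e v\<^sub>S\<close>. Two elements lie in the same right coset of
  \<open>H = \<langle>a, x\<rangle>\<close> iff they have the same N-part S, so the vertices of Cos(A,H,J) are the subsets
  of \<open>{0..<n}\<close>. As \<open>J = {1, x, z, zx}\<close>, the right coset of J through \<open>h v\<^sub>S\<close> (h dihedral) is
  determined by the unordered pair \<open>{S, S \<triangle> {p}}\<close>, where p is the image of 0 under h in \<open>\<int>/n\<close>,
  together with the quotient by n of the image of 0 under h in \<open>\<int>/n\<lambda>\<close>; this is one of the
  \<open>\<lambda>\<close> parallel copies of a cube edge, and incidence becomes membership. The same labels are
  still onto when restricted to \<open>X = N \<rtimes> \<langle>a\<rangle>\<close> and to the index-2 subgroup Y of elements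
  whose reflection bit equals the parity of \<open>|S|\<close>, giving the other two coset graphs.\<close>

lemma incgraph_iso_sym:
  assumes "incgraph_iso G1 G2"
  shows "incgraph_iso G2 G1"
proof -
  from assms obtain f g where f: "bij_betw f (verts G1) (verts G2)" and g: "bij_betw g (edges G1) (edges G2)"
    and i: "\<forall>v\<in>verts G1. \<forall>e\<in>edges G1. inc G1 v e \<longleftrightarrow> inc G2 (f v) (g e)"
    unfolding incgraph_iso_def by blast
  let ?f = "inv_into (verts G1) f" and ?g = "inv_into (edges G1) g"
  have "\<forall>v\<in>verts G2. \<forall>e\<in>edges G2. inc G2 v e \<longleftrightarrow> inc G1 (?f v) (?g e)"
  proof (intro ballI)
    fix v e assume "v \<in> verts G2" "e \<in> edges G2"
    then have "?f v \<in> verts G1" "?g e \<in> edges G1" "f (?f v) = v" "g (?g e) = e"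
      using f g by (auto simp: bij_betw_def inv_into_into f_inv_into_f)
    then show "inc G2 v e \<longleftrightarrow> inc G1 (?f v) (?g e)" using i by metis
  qed
  with f g show ?thesis
    unfolding incgraph_iso_def by (meson bij_betw_inv_into)
qed

lemma incgraph_iso_trans:
  assumes "incgraph_iso G1 G2" and "incgraph_iso G2 G3"
  shows "incgraph_iso G1 G3"
proof -
  from assms(1) obtain f g where f: "bij_betw f (verts G1) (verts G2)" and g: "bij_betw g (edges G1) (edges G2)"
    and i: "\<forall>v\<in>verts G1. \<forall>e\<in>edges G1. inc G1 v e \<longleftrightarrow> inc G2 (f v) (g e)"
    unfolding incgraph_iso_def by blast
  from assms(2) obtain f' g' where f': "bij_betw f' (verts G2) (verts G3)" and g': "bij_betw g' (edges G2) (edges G3)"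
    and i': "\<forall>v\<in>verts G2. \<forall>e\<in>edges G2. inc G2 v e \<longleftrightarrow> inc G3 (f' v) (g' e)"
    unfolding incgraph_iso_def by blast
  have "\<forall>v\<in>verts G1. \<forall>e\<in>edges G1. inc G1 v e \<longleftrightarrow> inc G3 ((f' \<circ> f) v) ((g' \<circ> g) e)"
    using i i' f g by (simp add: bij_betw_apply)
  with f g f' g' show ?thesis
    unfolding incgraph_iso_def by (meson bij_betw_trans)
qed

context
  fixes G1 :: "('v, 'e) incgraph" and G2 :: "('w, 'f) incgraph" and f g
  assumes bij_verts: "bij_betw f (verts G1) (verts G2)"
    and bij_edges: "bij_betw g (edges G1) (edges G2)"
    and inc_iff: "\<And>v e. v \<in> verts G1 \<Longrightarrow> e \<in> edges G1 \<Longrightarrow> inc G1 v e \<longleftrightarrow> inc G2 (f v) (g e)"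
begin

private lemma verts_image: "verts G2 = f ` verts G1"
  and edges_image: "edges G2 = g ` edges G1"
  using bij_verts bij_edges by (auto simp: bij_betw_def)

lemma ends_iso_image:
  assumes "e \<in> edges G1"
  shows "ends G2 (g e) = f ` ends G1 e"
  using assms inc_iff unfolding ends_def verts_image by auto

lemma nbrs_iso_image:
  assumes u: "u \<in> verts G1"
  shows "nbrs G2 (f u) = f ` nbrs G1 u"
proof -
  have "f w \<noteq> f u \<longleftrightarrow> w \<noteq> u" if "w \<in> verts G1" for w
    using bij_verts u that by (metis bij_betw_def inj_onD)
  then show ?thesis
    using u inc_iff unfolding nbrs_def verts_image edges_image by fastforce
qed

lemma common_edges_iso_image:
  assumes "u \<in> verts G1" and "w \<in> verts G1"
  shows "{e \<in> edges G2. inc G2 (f u) e \<and> inc G2 (f w) e} = g ` {e \<in> edges G1. inc G1 u e \<and> inc G1 w e}"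
  using assms inc_iff unfolding edges_image by auto

lemma valency_multiplicity_iso:
  assumes "valency_multiplicity G1 k m"
  shows "valency_multiplicity G2 k m"
proof -
  have inj_f: "inj_on f X" if "X \<subseteq> verts G1" for X
    using bij_verts that by (auto simp: bij_betw_def intro: inj_on_subset)
  have inj_g: "inj_on g X" if "X \<subseteq> edges G1" for X
    using bij_edges that by (auto simp: bij_betw_def intro: inj_on_subset)
  have "card (ends G2 e) = 2" if "e \<in> edges G2" for e
  proof -
    obtain e1 where e1: "e1 \<in> edges G1" "e = g e1" using \<open>e \<in> edges G2\<close> edges_image by blast
    have "ends G1 e1 \<subseteq> verts G1" unfolding ends_def by blast
    then show ?thesis
      using assms e1 ends_iso_image[OF e1(1)] card_image[OF inj_f]
      unfolding valency_multiplicity_def by auto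
  qed
  moreover have "card (nbrs G2 u) = k" if "u \<in> verts G2" for u
  proof -
    obtain u1 where u1: "u1 \<in> verts G1" "u = f u1" using \<open>u \<in> verts G2\<close> verts_image by blast
    have "nbrs G1 u1 \<subseteq> verts G1" unfolding nbrs_def by blast
    then show ?thesis
      using assms u1 nbrs_iso_image[OF u1(1)] card_image[OF inj_f]
      unfolding valency_multiplicity_def by auto
  qed
  moreover have "card {e \<in> edges G2. inc G2 u e \<and> inc G2 w e} = m"
    if u: "u \<in> verts G2" and w: "w \<in> nbrs G2 u" for u w
  proof -
    obtain u1 where u1: "u1 \<in> verts G1" "u = f u1" using u verts_image by blast
    then obtain w1 where w1: "w1 \<in> nbrs G1 u1" "w = f w1" using w nbrs_iso_image by blast
    have "w1 \<in> verts G1" using w1 unfolding nbrs_def by blast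
    then show ?thesis
      using assms u1 w1 common_edges_iso_image[OF u1(1)] card_image[OF inj_g]
      unfolding valency_multiplicity_def by auto
  qed
  ultimately show ?thesis
    using assms verts_image edges_image unfolding valency_multiplicity_def by auto
qed

end

lemma valency_multiplicity_incgraph_iso:
  assumes "incgraph_iso G1 G2" and "valency_multiplicity G1 k m"
  shows "valency_multiplicity G2 k m"
proof -
  obtain f g where "bij_betw f (verts G1) (verts G2)" "bij_betw g (edges G1) (edges G2)"
    "\<forall>v\<in>verts G1. \<forall>e\<in>edges G1. inc G1 v e \<longleftrightarrow> inc G2 (f v) (g e)"
    using assms(1) unfolding incgraph_iso_def by blast
  then show ?thesis using valency_multiplicity_iso assms(2) by blast
qed

section \<open>Coset graphs\<close>

lemma (in group) rcos_eq_iff: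
  assumes "subgroup H G" and "u \<in> carrier G" and "u' \<in> carrier G"
  shows "H #> u = H #> u' \<longleftrightarrow> u' \<otimes> inv u \<in> H"
proof
  assume "H #> u = H #> u'"
  then show "u' \<otimes> inv u \<in> H"
    using assms rcos_self subgroup.rcos_module[OF assms(1) is_group] by blast
next
  assume "u' \<otimes> inv u \<in> H"
  then show "H #> u = H #> u'"
    using assms subgroup.rcos_module[OF assms(1) is_group] repr_independence by blast
qed

lemma (in group) inc_cos_graph_iff:
  assumes sH: "subgroup H G" and sJ: "subgroup J G"
    and u0: "u0 \<in> carrier G" and v0: "v0 \<in> carrier G"
  shows "inc (cos_graph G H J) (H #> u0) (J #> v0) \<longleftrightarrow> v0 \<otimes> inv u0 \<in> J <#> H"
proof
  assume "inc (cos_graph G H J) (H #> u0) (J #> v0)"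
  then obtain u v where u: "u \<in> carrier G" and v: "v \<in> carrier G" and eu: "H #> u0 = H #> u"
    and ev: "J #> v0 = J #> v" and "v \<otimes> inv u \<in> J <#> H"
    unfolding cos_graph_def by auto
  then obtain j h where j: "j \<in> J" and h: "h \<in> H" and jh: "v \<otimes> inv u = j \<otimes> h"
    by (auto simp: set_mult_def)
  have hu: "u \<otimes> inv u0 \<in> H" using rcos_eq_iff[OF sH u0 u] eu by simp
  have jv: "v \<otimes> inv v0 \<in> J" using rcos_eq_iff[OF sJ v0 v] ev by simp
  have "v0 \<otimes> inv u0 = inv (v \<otimes> inv v0) \<otimes> (v \<otimes> inv u) \<otimes> (u \<otimes> inv u0)"
    using u v u0 v0 by (simp add: inv_mult_group m_assoc) (simp add: m_assoc[symmetric])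
  also have "\<dots> = (inv (v \<otimes> inv v0) \<otimes> j) \<otimes> (h \<otimes> (u \<otimes> inv u0))"
    using jh j h u v u0 v0 sH sJ by (simp add: m_assoc subgroup.mem_carrier)
  moreover have "inv (v \<otimes> inv v0) \<otimes> j \<in> J"
    using j jv sJ by (simp add: subgroup.m_closed subgroup.m_inv_closed)
  moreover have "h \<otimes> (u \<otimes> inv u0) \<in> H"
    using h hu sH by (simp add: subgroup.m_closed)
  ultimately show "v0 \<otimes> inv u0 \<in> J <#> H" unfolding set_mult_def by blast
next
  assume "v0 \<otimes> inv u0 \<in> J <#> H"
  then show "inc (cos_graph G H J) (H #> u0) (J #> v0)"
    using u0 v0 unfolding cos_graph_def by auto
qed

lemma (in group) bij_betw_rcosets_label:
  assumes sH: "subgroup H G" and onto: "label ` carrier G = L"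
    and label_eq: "\<And>u u'. u \<in> carrier G \<Longrightarrow> u' \<in> carrier G \<Longrightarrow> u' \<otimes> inv u \<in> H \<longleftrightarrow> label u = label u'"
  obtains r where "bij_betw (\<lambda>q. H #> r q) L (rcosets H)" and "\<And>q. q \<in> L \<Longrightarrow> r q \<in> carrier G \<and> label (r q) = q"
proof
  define r where "r q = (SOME u. u \<in> carrier G \<and> label u = q)" for q
  show r: "r q \<in> carrier G \<and> label (r q) = q" if q: "q \<in> L" for q
  proof -
    have "q \<in> label ` carrier G" using q onto by simp
    then obtain u where "u \<in> carrier G \<and> label u = q" by blast
    then show ?thesis unfolding r_def by (rule someI)
  qed
  have coset_eq: "H #> u = H #> u' \<longleftrightarrow> label u = label u'" if "u \<in> carrier G" "u' \<in> carrier G" for u u'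
    using rcos_eq_iff[OF sH that] label_eq[OF that] by simp
  show "bij_betw (\<lambda>q. H #> r q) L (rcosets H)"
  proof (rule bij_betwI')
    show "H #> r q = H #> r q' \<longleftrightarrow> q = q'" if "q \<in> L" "q' \<in> L" for q q'
      using coset_eq[of "r q" "r q'"] r[OF that(1)] r[OF that(2)] by simp
    show "H #> r q \<in> rcosets H" if "q \<in> L" for q
      using r[OF that] unfolding RCOSETS_def by auto
    show "\<exists>q\<in>L. C = H #> r q" if C_coset: "C \<in> rcosets H" for C
    proof -
      obtain u where u: "u \<in> carrier G" and C: "C = H #> u" using C_coset unfolding RCOSETS_def by auto
      have q: "label u \<in> L" using u onto by blast
      then have "C = H #> r (label u)" using C coset_eq[OF u, of "r (label u)"] r[OF q] by simp
      with q show ?thesis by blast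
    qed
  qed
qed

lemma (in group) incgraph_iso_cos_graphI:
  fixes Q :: "('v, 'e) incgraph"
  assumes sH: "subgroup H G" and sJ: "subgroup J G"
    and vlabel_onto: "vlabel ` carrier G = verts Q"
    and vlabel_eq: "\<And>u u'. u \<in> carrier G \<Longrightarrow> u' \<in> carrier G \<Longrightarrow> u' \<otimes> inv u \<in> H \<longleftrightarrow> vlabel u = vlabel u'"
    and elabel_onto: "elabel ` carrier G = edges Q"
    and elabel_eq: "\<And>u u'. u \<in> carrier G \<Longrightarrow> u' \<in> carrier G \<Longrightarrow> u' \<otimes> inv u \<in> J \<longleftrightarrow> elabel u = elabel u'"
    and inc_label: "\<And>u v. u \<in> carrier G \<Longrightarrow> v \<in> carrier G \<Longrightarrow>
                       v \<otimes> inv u \<in> J <#> H \<longleftrightarrow> inc Q (vlabel u) (elabel v)"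
  shows "incgraph_iso Q (cos_graph G H J)"
proof -
  obtain rV where bij_V: "bij_betw (\<lambda>q. H #> rV q) (verts Q) (rcosets H)"
    and rV: "\<And>q. q \<in> verts Q \<Longrightarrow> rV q \<in> carrier G \<and> vlabel (rV q) = q"
    using bij_betw_rcosets_label[OF sH vlabel_onto vlabel_eq] by blast
  obtain rE where bij_E: "bij_betw (\<lambda>q. J #> rE q) (edges Q) (rcosets J)"
    and rE: "\<And>q. q \<in> edges Q \<Longrightarrow> rE q \<in> carrier G \<and> elabel (rE q) = q"
    using bij_betw_rcosets_label[OF sJ elabel_onto elabel_eq] by blast
  have "inc Q q p \<longleftrightarrow> inc (cos_graph G H J) (H #> rV q) (J #> rE p)"
    if "q \<in> verts Q" "p \<in> edges Q" for q p
    using inc_cos_graph_iff[OF sH sJ] inc_label rV[OF that(1)] rE[OF that(2)] by simp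
  with bij_V bij_E show ?thesis unfolding incgraph_iso_def by (auto simp: cos_graph_def)
qed

lemma set_mult_iff: "x \<in> J <#>\<^bsub>G\<^esub> H \<longleftrightarrow> (\<exists>j\<in>J. \<exists>h\<in>H. x = j \<otimes>\<^bsub>G\<^esub> h)"
  unfolding set_mult_def by blast

lemma set_mult_carrier_update: "H <#>\<^bsub>G\<lparr>carrier := K\<rparr>\<^esub> J = H <#>\<^bsub>G\<^esub> J"
  unfolding set_mult_def by simp

lemma (in group) incgraph_iso_cos_graph_subgroupI:
  fixes Q :: "('v, 'e) incgraph"
  assumes K: "subgroup K G" and sH: "subgroup H G" and sJ: "subgroup J G"
    and JH_K: "(J \<inter> K) <#> (H \<inter> K) = JH \<inter> K"
    and vlabel_onto: "vlabel ` K = verts Q" and elabel_onto: "elabel ` K = edges Q"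
    and vlabel_eq: "\<And>u u'. u \<in> K \<Longrightarrow> u' \<in> K \<Longrightarrow> u' \<otimes> inv u \<in> H \<longleftrightarrow> vlabel u = vlabel u'"
    and elabel_eq: "\<And>u u'. u \<in> K \<Longrightarrow> u' \<in> K \<Longrightarrow> u' \<otimes> inv u \<in> J \<longleftrightarrow> elabel u = elabel u'"
    and inc_label: "\<And>u v. u \<in> K \<Longrightarrow> v \<in> K \<Longrightarrow> v \<otimes> inv u \<in> JH \<longleftrightarrow> inc Q (vlabel u) (elabel v)"
  shows "incgraph_iso Q (cos_graph (G\<lparr>carrier := K\<rparr>) (H \<inter> K) (J \<inter> K))"
proof -
  interpret K: group "G\<lparr>carrier := K\<rparr>" by (rule subgroup.subgroup_is_group[OF K is_group])
  have quot: "v \<otimes>\<^bsub>G\<lparr>carrier := K\<rparr>\<^esub> inv\<^bsub>G\<lparr>carrier := K\<rparr>\<^esub> u = v \<otimes> inv u"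
    and quot_K: "v \<otimes> inv u \<in> K" if "u \<in> K" "v \<in> K" for u v
    using that K by (simp_all add: subgroup.m_closed subgroup.m_inv_closed)
  show ?thesis
  proof (rule K.incgraph_iso_cos_graphI)
    show "subgroup (H \<inter> K) (G\<lparr>carrier := K\<rparr>)" "subgroup (J \<inter> K) (G\<lparr>carrier := K\<rparr>)"
      using subgroup_incl subgroups_Inter_pair K sH sJ by (metis inf_le2)+
  qed (use vlabel_onto elabel_onto vlabel_eq elabel_eq inc_label quot quot_K JH_K
        in \<open>simp_all add: set_mult_carrier_update\<close>)
qed

text \<open>A constant for the symmetric difference (the abbreviation \<open>sym_diff\<close> unfolds), so that
  the simplifier can use the Boolean group laws below.\<close>

definition symdiff :: "'a set \<Rightarrow> 'a set \<Rightarrow> 'a set" where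
  "symdiff A B = (A - B) \<union> (B - A)"

lemma symdiff_assoc: "symdiff (symdiff A B) C = symdiff A (symdiff B C)"
  and symdiff_empty [simp]: "symdiff A {} = A" "symdiff {} A = A"
  and symdiff_self [simp]: "symdiff A A = {}"
  and symdiff_cancel [simp]: "symdiff A (symdiff A B) = B"
  and symdiff_eq_iff: "symdiff A B = C \<longleftrightarrow> B = symdiff A C"
  and symdiff_empty_iff: "symdiff A B = {} \<longleftrightarrow> A = B"
  unfolding symdiff_def by blast+

lemma symdiff_subset: "A \<subseteq> X \<Longrightarrow> B \<subseteq> X \<Longrightarrow> symdiff A B \<subseteq> X"
  unfolding symdiff_def by blast

lemma image_symdiff: "inj_on f (A \<union> B) \<Longrightarrow> f ` symdiff A B = symdiff (f ` A) (f ` B)"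
  unfolding symdiff_def inj_on_def by blast

lemma symdiff_subset_singleton_iff: "symdiff S T \<subseteq> {p} \<longleftrightarrow> T \<in> {S, symdiff S {p}}"
proof -
  have "symdiff S T \<subseteq> {p} \<longleftrightarrow> symdiff S T = {} \<or> symdiff S T = {p}" by blast
  also have "\<dots> \<longleftrightarrow> T = S \<or> T = symdiff S {p}" by (metis symdiff_empty_iff symdiff_eq_iff)
  finally show ?thesis by blast
qed

lemma odd_card_symdiff:
  assumes "finite X" and "finite Y"
  shows "odd (card (symdiff X Y)) \<longleftrightarrow> odd (card X) \<noteq> odd (card Y)"
proof -
  have "symdiff X Y = (X \<union> Y) - (X \<inter> Y)" unfolding symdiff_def by blast
  then have "card (symdiff X Y) = card (X \<union> Y) - card (X \<inter> Y)"
    using assms card_Diff_subset[of "X \<inter> Y" "X \<union> Y"] by auto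
  moreover have "card (X \<inter> Y) \<le> card (X \<union> Y)" using assms by (intro card_mono) auto
  ultimately have "card (symdiff X Y) + 2 * card (X \<inter> Y) = card X + card Y"
    using card_Un_Int[OF assms] by linarith
  then show ?thesis by (metis even_add even_mult_iff even_numeral)
qed

lemma symdiff_edge_eq_iff:
  "{S1, symdiff S1 {p1}} = {S2, symdiff S2 {p2}} \<longleftrightarrow> p1 = p2 \<and> symdiff S2 S1 \<subseteq> {p1}"
proof
  assume h: "{S1, symdiff S1 {p1}} = {S2, symdiff S2 {p2}}"
  show "p1 = p2 \<and> symdiff S2 S1 \<subseteq> {p1}"
  proof (cases "S1 = S2")
    case True
    then have "symdiff S1 {p1} = symdiff S1 {p2}" using h by (auto simp: doubleton_eq_iff symdiff_def)
    then have "{p1} = {p2}" by (metis symdiff_cancel)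
    with True show ?thesis by simp
  next
    case False
    then have "S1 = symdiff S2 {p2}" and "symdiff S1 {p1} = S2" using h by (auto simp: doubleton_eq_iff)
    then have "symdiff {p2} {p1} = {}" and "symdiff S2 S1 = {p2}"
      by (simp_all add: symdiff_assoc symdiff_eq_iff)
    then show ?thesis unfolding symdiff_def by blast
  qed
next
  assume "p1 = p2 \<and> symdiff S2 S1 \<subseteq> {p1}"
  then show "{S1, symdiff S1 {p1}} = {S2, symdiff S2 {p2}}"
    by (auto simp: symdiff_subset_singleton_iff symdiff_assoc)
qed

lemma verts_hypercube_mult [simp]: "verts (hypercube_mult n l) = Pow {..<n}"
  and inc_hypercube_mult [simp]: "inc (hypercube_mult n l) v E \<longleftrightarrow> v \<in> fst E"
  unfolding hypercube_mult_def by simp_all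

lemma edges_hypercube_mult:
  "edges (hypercube_mult n l) =
     {({S, T}, j) | S T j. S \<subseteq> {..<n} \<and> T \<subseteq> {..<n} \<and> card (symdiff S T) = 1 \<and> j < l}"
  unfolding hypercube_mult_def symdiff_def by simp

lemma hypercube_mult_edgeE:
  assumes "E \<in> edges (hypercube_mult n l)"
  obtains S i j where "S \<subseteq> {..<n}" "i < n" "j < l" "E = ({S, symdiff S {i}}, j)"
proof -
  obtain S T j where E: "E = ({S, T}, j)"
    and c: "S \<subseteq> {..<n}" "T \<subseteq> {..<n}" "card (symdiff S T) = 1" "j < l"
    using assms unfolding edges_hypercube_mult by blast
  obtain i where i: "symdiff S T = {i}" using c(3) card_1_singletonE by blast
  then have "i < n" and "T = symdiff S {i}" using c(1,2) by (auto simp: symdiff_def symdiff_eq_iff)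
  with that c E show ?thesis by blast
qed

lemma hypercube_mult_edgeI:
  assumes "S \<subseteq> {..<n}" and "i < n" and "j < l"
  shows "({S, symdiff S {i}}, j) \<in> edges (hypercube_mult n l)"
proof -
  have "symdiff S {i} \<subseteq> {..<n}" using assms by (intro symdiff_subset) auto
  then show ?thesis unfolding edges_hypercube_mult using assms by force
qed

lemma nbrs_hypercube_mult:
  assumes l: "0 < l" and u: "u \<subseteq> {..<n}"
  shows "nbrs (hypercube_mult n l) u = (\<lambda>i. symdiff u {i}) ` {..<n}"
proof
  show "nbrs (hypercube_mult n l) u \<subseteq> (\<lambda>i. symdiff u {i}) ` {..<n}"
  proof
    fix w assume "w \<in> nbrs (hypercube_mult n l) u"
    then obtain E where w: "w \<noteq> u" and E: "E \<in> edges (hypercube_mult n l)" "u \<in> fst E" "w \<in> fst E"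
      unfolding nbrs_def by auto
    obtain S i j where i: "i < n" and "E = ({S, symdiff S {i}}, j)" using E(1) by (rule hypercube_mult_edgeE)
    then have "{u, w} = {S, symdiff S {i}}" using E w by auto
    then have "w = symdiff u {i}" by (auto simp: doubleton_eq_iff symdiff_assoc)
    with i show "w \<in> (\<lambda>i. symdiff u {i}) ` {..<n}" by blast
  qed
  show "(\<lambda>i. symdiff u {i}) ` {..<n} \<subseteq> nbrs (hypercube_mult n l) u"
  proof
    fix w assume "w \<in> (\<lambda>i. symdiff u {i}) ` {..<n}"
    then obtain i where i: "i < n" "w = symdiff u {i}" by blast
    have "({u, w}, 0) \<in> edges (hypercube_mult n l)" using hypercube_mult_edgeI[OF u i(1) l] i by simp
    moreover have "w \<subseteq> {..<n}" "w \<noteq> u" using i u by (auto simp: symdiff_def)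
    ultimately show "w \<in> nbrs (hypercube_mult n l) u"
      using u unfolding nbrs_def by force
  qed
qed

lemma valency_multiplicity_hypercube_mult:
  assumes l: "0 < l"
  shows "valency_multiplicity (hypercube_mult n l) n l"
proof -
  let ?Q = "hypercube_mult n l"
  have "edges ?Q \<subseteq> Pow (Pow {..<n}) \<times> {..<l}" unfolding edges_hypercube_mult by auto
  then have fin: "finite (edges ?Q)" by (rule finite_subset) simp
  have ends: "card (ends ?Q E) = 2" if E_edge: "E \<in> edges ?Q" for E
  proof -
    obtain S i j where S: "S \<subseteq> {..<n}" "i < n" and E: "E = ({S, symdiff S {i}}, j)"
      using E_edge by (rule hypercube_mult_edgeE)
    have "symdiff S {i} \<subseteq> {..<n}" using S by (intro symdiff_subset) auto
    with S have "ends ?Q E = {S, symdiff S {i}}" unfolding ends_def E by auto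
    moreover have "S \<noteq> symdiff S {i}" by (auto simp: symdiff_def)
    ultimately show ?thesis by simp
  qed
  have nbrs: "card (nbrs ?Q u) = n" if "u \<in> verts ?Q" for u
  proof -
    have "inj_on (\<lambda>i. symdiff u {i}) {..<n}" by (rule inj_onI) (metis symdiff_cancel singleton_inject)
    then show ?thesis using that l by (simp add: nbrs_hypercube_mult card_image)
  qed
  have mult: "card {E \<in> edges ?Q. inc ?Q u E \<and> inc ?Q w E} = l"
    if u_vert: "u \<in> verts ?Q" and w_nbr: "w \<in> nbrs ?Q u" for u w
  proof -
    have u: "u \<subseteq> {..<n}" using u_vert by simp
    then obtain i where i: "i < n" "w = symdiff u {i}" using w_nbr nbrs_hypercube_mult[OF l] by auto
    have "w \<noteq> u" using i by (auto simp: symdiff_def)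
    then have "{E \<in> edges ?Q. inc ?Q u E \<and> inc ?Q w E} = (\<lambda>j. ({u, w}, j)) ` {..<l}"
      using hypercube_mult_edgeI[OF u i(1)] i
      by (auto elim!: hypercube_mult_edgeE simp: doubleton_eq_iff)
    then show ?thesis by (simp add: card_image inj_on_def)
  qed
  show ?thesis
    unfolding valency_multiplicity_def using fin ends nbrs mult by simp
qed

section \<open>The group A\<close>

lemma mod_mult_mod_left: "(b mod (int n * int l)) mod int n = b mod int n"
  by (simp add: mod_mod_cancel)

lemma minus_add_mod_left: "(- (a mod m + b)) mod m = (- (a + b)) mod (m :: int)"
proof -
  have "(- (a mod m + b)) mod m = (- b - a mod m) mod m" by (simp add: algebra_simps)
  also have "\<dots> = (- b - a) mod m" by (rule mod_diff_right_eq)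
  also have "- b - a = - (a + b)" by simp
  finally show ?thesis .
qed

lemma minus_add_mod_right: "(- (a + b mod m)) mod m = (- (a + b)) mod (m :: int)"
  using minus_add_mod_left[of b m a] by (simp add: add.commute)

lemma minus_mod_diff: "(- (x mod m) - c) mod m = (- x - c) mod (m :: int)"
  by (metis mod_diff_left_eq mod_minus_eq)

lemma hact_mod: "hact n h (x mod int n) = hact n h x"
  unfolding hact_def by (simp add: minus_add_mod_left minus_mod_diff mod_add_left_eq)

lemma hact_mod_mult: "hact n (k mod (int n * int l), e) i = hact n (k, e) i"
proof -
  have "(i + k mod (int n * int l)) mod int n = (i + k) mod int n"
    by (metis mod_add_right_eq mod_mult_mod_left)
  moreover have "(- (i + k mod (int n * int l))) mod int n = (- (i + k)) mod int n"
    by (metis minus_add_mod_right mod_mult_mod_left)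
  ultimately show ?thesis unfolding hact_def by simp
qed

lemma hact_dih_mult: "hact n (dih_mult n l h1 h2) i = hact n h2 (hact n h1 i)"
proof -
  obtain k1 e1 k2 e2 where h: "h1 = (k1, e1)" "h2 = (k2, e2)" by fastforce
  have "hact n (dih_mult n l h1 h2) i = hact n (k1 + (if e1 then - k2 else k2), e1 \<noteq> e2) i"
    unfolding h dih_mult_def by (simp add: hact_mod_mult)
  also have "\<dots> = hact n (k2, e2) (if e1 then - (i + k1) else i + k1)"
    unfolding hact_def by (cases e1; cases e2) (simp_all add: algebra_simps)
  also have "\<dots> = hact n h2 (hact n h1 i)"
    unfolding h by (simp add: hact_def[of n "(k1, e1)"] hact_mod)
  finally show ?thesis .
qed

definition dih_inv :: "nat \<Rightarrow> nat \<Rightarrow> int \<times> bool \<Rightarrow> int \<times> bool" where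
  "dih_inv n l h = (if snd h then h else ((- fst h) mod (int n * int l), False))"

lemma mult_groupA: "(k1, e1, S1) \<otimes>\<^bsub>groupA n l\<^esub> (k2, e2, S2) =
   (fst (dih_mult n l (k1, e1) (k2, e2)), snd (dih_mult n l (k1, e1) (k2, e2)), symdiff (hact n (k2, e2) ` S1) S2)"
  unfolding groupA_def symdiff_def by (simp add: Let_def)

lemma carrier_groupA:
  "(k, e, S) \<in> carrier (groupA n l) \<longleftrightarrow> 0 \<le> k \<and> k < int n * int l \<and> S \<subseteq> {0..<int n}"
  unfolding groupA_def by simp

lemma one_groupA: "\<one>\<^bsub>groupA n l\<^esub> = (0, False, {})"
  unfolding groupA_def by simp

locale cube_group =
  fixes n l :: nat
  assumes n_gt_1: "1 < n" and l_pos: "0 < l"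
begin

abbreviation "M \<equiv> int n * int l"
abbreviation "A \<equiv> groupA n l"
abbreviation "dih \<equiv> dih_mult n l"
abbreviation "hi \<equiv> dih_inv n l"
abbreviation "ha \<equiv> hact n"

lemma n_pos: "int n > 0" using n_gt_1 by simp
lemma n_le_M: "int n \<le> M"
  using l_pos mult_left_mono[of 1 "int l" "int n"] by simp
lemma M_gt_1: "M > 1" using n_gt_1 n_le_M by linarith
lemma M_pos: "M > 0" using M_gt_1 by linarith

lemma dih_range: "0 \<le> fst (dih h1 h2) \<and> fst (dih h1 h2) < M"
  unfolding dih_mult_def using M_gt_1 by simp

lemma dih_inv_range: "0 \<le> fst h \<Longrightarrow> fst h < M \<Longrightarrow> 0 \<le> fst (hi h) \<and> fst (hi h) < M"
  unfolding dih_inv_def using M_gt_1 by simp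

lemma dih_inv_pair:
  assumes "0 \<le> k" "k < M"
  obtains k' e' where "hi (k, e) = (k', e')" "0 \<le> k'" "k' < M"
  using dih_inv_range[of "(k, e)"] assms by (metis prod.collapse fst_conv)

lemma hact_range: "0 \<le> ha h i \<and> ha h i < int n"
  unfolding hact_def using n_pos by simp

lemma hact_image_subset: "ha h ` S \<subseteq> {0..<int n}"
  using hact_range[of h] by auto

lemma hact_one: "0 \<le> i \<Longrightarrow> i < int n \<Longrightarrow> ha (0, False) i = i"
  unfolding hact_def by simp

lemma hact_zero: "ha (0, e) 0 = 0"
  unfolding hact_def by simp

lemma dih_one_left: "0 \<le> k \<Longrightarrow> k < M \<Longrightarrow> dih (0, False) (k, e) = (k, e)"
  unfolding dih_mult_def by simp

lemma dih_inv_left: "0 \<le> k \<Longrightarrow> k < M \<Longrightarrow> dih (hi (k, e)) (k, e) = (0, False)"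
  using mod_add_left_eq[of "- k" M k] by (cases e) (simp_all add: dih_mult_def dih_inv_def)

lemma dih_inv_right: "0 \<le> k \<Longrightarrow> k < M \<Longrightarrow> dih (k, e) (hi (k, e)) = (0, False)"
  using mod_add_right_eq[of k "- k" M] by (cases e) (simp_all add: dih_mult_def dih_inv_def)

lemma dih_assoc: "dih (dih h1 h2) h3 = dih h1 (dih h2 h3)"
proof -
  obtain k1 e1 k2 e2 k3 e3 where h: "h1 = (k1, e1)" "h2 = (k2, e2)" "h3 = (k3, e3)"
    by (metis prod.exhaust)
  show ?thesis unfolding h dih_mult_def
    by (cases e1; cases e2; cases e3) (simp_all add: mod_simps minus_add_mod_right, simp_all add: algebra_simps)
qed

lemma hact_dih_inv_left:
  "0 \<le> k \<Longrightarrow> k < M \<Longrightarrow> 0 \<le> i \<Longrightarrow> i < int n \<Longrightarrow> ha (k, e) (ha (hi (k, e)) i) = i"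
  using hact_dih_mult[of n l "hi (k, e)" "(k, e)" i, symmetric] by (simp add: dih_inv_left hact_one)

lemma hact_dih_inv_right:
  "0 \<le> k \<Longrightarrow> k < M \<Longrightarrow> 0 \<le> i \<Longrightarrow> i < int n \<Longrightarrow> ha (hi (k, e)) (ha (k, e) i) = i"
  using hact_dih_mult[of n l "(k, e)" "hi (k, e)" i, symmetric] by (simp add: dih_inv_right hact_one)

lemma inj_on_hact: "0 \<le> k \<Longrightarrow> k < M \<Longrightarrow> inj_on (ha (k, e)) {0..<int n}"
  by (rule inj_on_inverseI[where g = "ha (hi (k, e))"]) (simp add: hact_dih_inv_right)

lemma card_hact_image: "0 \<le> k \<Longrightarrow> k < M \<Longrightarrow> S \<subseteq> {0..<int n} \<Longrightarrow> card (ha (k, e) ` S) = card S"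
  by (rule card_image, rule inj_on_subset[OF inj_on_hact]) auto

lemma hact_image_subset_singleton_iff:
  assumes "0 \<le> k" "k < M" and "D \<subseteq> {0..<int n}" and "0 \<le> x" "x < int n"
  shows "ha (k, e) ` D \<subseteq> {ha (k, e) x} \<longleftrightarrow> D \<subseteq> {x}"
proof -
  have "x \<in> {0..<int n}" using assms(4,5) by simp
  with inj_on_hact[OF assms(1,2), of e] assms(3) show ?thesis unfolding inj_on_def by blast
qed

lemma groupA_mult_closed:
  assumes "u \<in> carrier A" and "v \<in> carrier A"
  shows "u \<otimes>\<^bsub>A\<^esub> v \<in> carrier A"
proof -
  obtain k1 e1 S1 k2 e2 S2 where uv: "u = (k1, e1, S1)" "v = (k2, e2, S2)" by (metis prod.exhaust)
  have "symdiff (ha (k2, e2) ` S1) S2 \<subseteq> {0..<int n}"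
    using assms uv hact_image_subset by (intro symdiff_subset) (auto simp: carrier_groupA)
  then show ?thesis unfolding uv mult_groupA carrier_groupA using dih_range by simp
qed

lemma groupA_m_assoc:
  assumes u: "u \<in> carrier A" and v: "v \<in> carrier A" and w: "w \<in> carrier A"
  shows "(u \<otimes>\<^bsub>A\<^esub> v) \<otimes>\<^bsub>A\<^esub> w = u \<otimes>\<^bsub>A\<^esub> (v \<otimes>\<^bsub>A\<^esub> w)"
proof -
  obtain k1 e1 S1 k2 e2 S2 k3 e3 S3 where uvw: "u = (k1, e1, S1)" "v = (k2, e2, S2)" "w = (k3, e3, S3)"
    by (metis prod.exhaust)
  have c: "0 \<le> k3" "k3 < M" "S2 \<subseteq> {0..<int n}" using v w uvw by (auto simp: carrier_groupA)
  have "inj_on (ha (k3, e3)) (ha (k2, e2) ` S1 \<union> S2)"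
    by (rule inj_on_subset[OF inj_on_hact[OF c(1,2)]]) (use hact_image_subset c(3) in blast)
  then have "ha (k3, e3) ` symdiff (ha (k2, e2) ` S1) S2 = symdiff (ha (k3, e3) ` ha (k2, e2) ` S1) (ha (k3, e3) ` S2)"
    by (rule image_symdiff)
  moreover have "ha (dih (k2, e2) (k3, e3)) ` S1 = ha (k3, e3) ` ha (k2, e2) ` S1"
    by (simp add: image_image hact_dih_mult)
  ultimately show ?thesis unfolding uvw by (simp add: mult_groupA dih_assoc symdiff_assoc)
qed

fun invA :: "int \<times> bool \<times> int set \<Rightarrow> int \<times> bool \<times> int set" where
  "invA (k, e, S) = (fst (hi (k, e)), snd (hi (k, e)), ha (hi (k, e)) ` S)"

lemma invA_closed: "u \<in> carrier A \<Longrightarrow> invA u \<in> carrier A"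
  by (cases u) (auto simp: invA.simps carrier_groupA dih_inv_range hact_image_subset)

lemma invA_left:
  assumes u: "u \<in> carrier A"
  shows "invA u \<otimes>\<^bsub>A\<^esub> u = \<one>\<^bsub>A\<^esub>"
proof -
  obtain k e S where u1: "u = (k, e, S)" by (cases u)
  then have c: "0 \<le> k" "k < M" "S \<subseteq> {0..<int n}" using u carrier_groupA by auto
  then have "ha (k, e) ` ha (hi (k, e)) ` S = S"
    by (force simp: image_image hact_dih_inv_left)
  then show ?thesis unfolding u1 invA.simps by (simp add: mult_groupA one_groupA dih_inv_left c)
qed

lemma group_A: "group A"
proof (rule groupI)
  show "\<one>\<^bsub>A\<^esub> \<in> carrier A" using M_gt_1 by (simp add: one_groupA carrier_groupA)
  show "\<one>\<^bsub>A\<^esub> \<otimes>\<^bsub>A\<^esub> u = u" if "u \<in> carrier A" for u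
    using that by (cases u) (simp add: one_groupA mult_groupA carrier_groupA dih_one_left)
qed (auto simp: groupA_mult_closed groupA_m_assoc intro: invA_closed invA_left)

lemma inv_groupA: "u \<in> carrier A \<Longrightarrow> inv\<^bsub>A\<^esub> u = invA u"
  by (rule group.inv_equality[OF group_A invA_left _ invA_closed])

lemma finite_carrier_A: "finite (carrier A)"
proof (rule finite_subset)
  show "carrier A \<subseteq> {0..<M} \<times> UNIV \<times> Pow {0..<int n}" by (auto simp: groupA_def)
qed simp

lemma mult_inv_groupA:
  assumes u: "(k1, e1, S1) \<in> carrier A" and v: "(k2, e2, S2) \<in> carrier A"
  shows "(k2, e2, S2) \<otimes>\<^bsub>A\<^esub> inv\<^bsub>A\<^esub> (k1, e1, S1) =
    (fst (dih (k2, e2) (hi (k1, e1))), snd (dih (k2, e2) (hi (k1, e1))), ha (hi (k1, e1)) ` symdiff S2 S1)"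
proof -
  have c: "0 \<le> k1" "k1 < M" "S1 \<subseteq> {0..<int n}" "S2 \<subseteq> {0..<int n}"
    using u v carrier_groupA by auto
  obtain k e where h: "hi (k1, e1) = (k, e)" "0 \<le> k" "k < M" using dih_inv_pair[OF c(1,2)] .
  have "inj_on (ha (k, e)) (S2 \<union> S1)"
    by (rule inj_on_subset[OF inj_on_hact[OF h(2,3)]]) (use c in blast)
  then have "ha (k, e) ` symdiff S2 S1 = symdiff (ha (k, e) ` S2) (ha (k, e) ` S1)"
    by (rule image_symdiff)
  then show ?thesis using u by (simp add: inv_groupA invA.simps mult_groupA h)
qed

end

context cube_group
begin

definition Hset :: "(int \<times> bool \<times> int set) set" where
  "Hset = {(k, e, S). 0 \<le> k \<and> k < M \<and> S = {}}"

definition Jset :: "(int \<times> bool \<times> int set) set" where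
  "Jset = {(k, e, S). k = 0 \<and> S \<subseteq> {0}}"

text \<open>The product \<open>J H\<close> (\<open>set_mult_Jset_Hset_restrict\<close>): as \<open>z h = h v\<^sub>p\<close> with p the image
  of 0 under h, its elements are the h and the \<open>h v\<^sub>p\<close>.\<close>

definition JH :: "(int \<times> bool \<times> int set) set" where
  "JH = {(k, e, S). (k, e, S) \<in> carrier A \<and> S \<subseteq> {ha (k, e) 0}}"

definition Xset :: "(int \<times> bool \<times> int set) set" where
  "Xset = {(k, e, S). (k, e, S) \<in> carrier A \<and> \<not> e}"

text \<open>Y is written as the set of \<open>a\<^sup>k x\<^sup>e v\<^sub>S\<close> with \<open>e = |S| mod 2\<close>; that this is the paper's
  \<open>(\<langle>v\<^sub>0v\<^sub>1, \<dots>\<rangle> \<rtimes> \<langle>a\<rangle>) \<rtimes> \<langle>zx\<rangle>\<close> is \<open>generate_a_zx\<close> below.\<close>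

definition Yset :: "(int \<times> bool \<times> int set) set" where
  "Yset = {(k, e, S). (k, e, S) \<in> carrier A \<and> (odd (card S) \<longleftrightarrow> e)}"

lemma in_Hset: "(k, e, S) \<in> Hset \<longleftrightarrow> 0 \<le> k \<and> k < M \<and> S = {}"
  and in_Jset: "(k, e, S) \<in> Jset \<longleftrightarrow> k = 0 \<and> S \<subseteq> {0}"
  and in_JH: "(k, e, S) \<in> JH \<longleftrightarrow> (k, e, S) \<in> carrier A \<and> S \<subseteq> {ha (k, e) 0}"
  and in_Xset: "(k, e, S) \<in> Xset \<longleftrightarrow> (k, e, S) \<in> carrier A \<and> \<not> e"
  and in_Yset: "(k, e, S) \<in> Yset \<longleftrightarrow> (k, e, S) \<in> carrier A \<and> (odd (card S) \<longleftrightarrow> e)"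
  unfolding Hset_def Jset_def JH_def Xset_def Yset_def by simp_all

lemma subgroup_groupAI:
  assumes "K \<subseteq> carrier A" "\<one>\<^bsub>A\<^esub> \<in> K" "\<And>u. u \<in> K \<Longrightarrow> invA u \<in> K"
    "\<And>u v. u \<in> K \<Longrightarrow> v \<in> K \<Longrightarrow> u \<otimes>\<^bsub>A\<^esub> v \<in> K"
  shows "subgroup K A"
proof (rule group.subgroupI[OF group_A])
  show "K \<subseteq> carrier A" "K \<noteq> {}" using assms by auto
  show "\<And>u. u \<in> K \<Longrightarrow> inv\<^bsub>A\<^esub> u \<in> K" using assms inv_groupA by auto
  show "\<And>u v. u \<in> K \<Longrightarrow> v \<in> K \<Longrightarrow> u \<otimes>\<^bsub>A\<^esub> v \<in> K" by fact
qed

lemma subgroup_Hset: "subgroup Hset A"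
proof (rule subgroup_groupAI)
  show "Hset \<subseteq> carrier A" unfolding Hset_def by (auto simp: carrier_groupA)
  show "\<one>\<^bsub>A\<^esub> \<in> Hset" by (simp add: one_groupA in_Hset M_pos M_gt_1)
next
  fix u assume "u \<in> Hset"
  then obtain k e where u: "u = (k, e, {})" "0 \<le> k" "k < M" unfolding Hset_def by auto
  show "invA u \<in> Hset" unfolding u invA.simps in_Hset using dih_inv_range[of "(k,e)"] u by simp
next
  fix u v assume "u \<in> Hset" "v \<in> Hset"
  then obtain k1 e1 k2 e2 where "u = (k1, e1, {})" "v = (k2, e2, {})" unfolding Hset_def by auto
  then show "u \<otimes>\<^bsub>A\<^esub> v \<in> Hset" by (simp add: mult_groupA in_Hset dih_range)
qed

lemma subgroup_Jset: "subgroup Jset A"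
proof (rule subgroup_groupAI)
  show "Jset \<subseteq> carrier A" unfolding Jset_def using M_pos M_gt_1 n_pos by (auto simp: carrier_groupA subset_iff)
  show "\<one>\<^bsub>A\<^esub> \<in> Jset" by (simp add: one_groupA in_Jset)
next
  fix u assume "u \<in> Jset"
  then obtain e S where u: "u = (0, e, S)" "S \<subseteq> {0}" unfolding Jset_def by auto
  have "hi (0, e) = (0, e)" unfolding dih_inv_def by simp
  then show "invA u \<in> Jset" unfolding u invA.simps in_Jset using u hact_zero by auto
next
  fix u v assume "u \<in> Jset" "v \<in> Jset"
  then obtain e1 S1 e2 S2 where uv: "u = (0, e1, S1)" "v = (0, e2, S2)" "S1 \<subseteq> {0}" "S2 \<subseteq> {0}"
    unfolding Jset_def by auto
  have "symdiff (ha (0, e2) ` S1) S2 \<subseteq> {0}" using uv hact_zero by (intro symdiff_subset) auto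
  then show "u \<otimes>\<^bsub>A\<^esub> v \<in> Jset" unfolding uv by (simp add: mult_groupA in_Jset dih_mult_def)
qed

lemma subgroup_Xset: "subgroup Xset A"
proof (rule subgroup_groupAI)
  show "Xset \<subseteq> carrier A" unfolding Xset_def by auto
  show "\<one>\<^bsub>A\<^esub> \<in> Xset" by (simp add: one_groupA in_Xset carrier_groupA M_pos M_gt_1)
next
  fix u assume u: "u \<in> Xset"
  then obtain k S where u1: "u = (k, False, S)" unfolding Xset_def by auto
  have "invA u \<in> carrier A" using u invA_closed unfolding Xset_def by auto
  then show "invA u \<in> Xset" unfolding u1 by (simp add: invA.simps dih_inv_def Xset_def)
next
  fix u v assume uv: "u \<in> Xset" "v \<in> Xset"
  then obtain k1 S1 k2 S2 where u1: "u = (k1, False, S1)" "v = (k2, False, S2)" unfolding Xset_def by auto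
  have "u \<otimes>\<^bsub>A\<^esub> v \<in> carrier A" using uv groupA_mult_closed unfolding Xset_def by auto
  then show "u \<otimes>\<^bsub>A\<^esub> v \<in> Xset" unfolding u1 by (simp add: mult_groupA dih_mult_def Xset_def)
qed

lemma subgroup_Yset: "subgroup Yset A"
proof (rule subgroup_groupAI)
  show "Yset \<subseteq> carrier A" unfolding Yset_def by auto
  show "\<one>\<^bsub>A\<^esub> \<in> Yset" by (simp add: one_groupA in_Yset carrier_groupA M_pos M_gt_1)
next
  fix u assume u: "u \<in> Yset"
  then obtain k e S where u1: "u = (k, e, S)" and c: "0 \<le> k" "k < M" "S \<subseteq> {0..<int n}" "odd (card S) \<longleftrightarrow> e"
    unfolding Yset_def carrier_groupA by auto
  obtain kk ee where hh: "hi (k, e) = (kk, ee)" "0 \<le> kk" "kk < M" using dih_inv_pair[OF c(1,2)] .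
  have ee: "ee = e" using hh(1) unfolding dih_inv_def by (cases e) auto
  have "invA u \<in> carrier A" using u invA_closed unfolding Yset_def by auto
  moreover have "card (ha (kk, ee) ` S) = card S" using card_hact_image[OF hh(2,3) c(3)] .
  ultimately show "invA u \<in> Yset" unfolding u1 using c ee by (simp add: invA.simps hh in_Yset)
next
  fix u v assume uv: "u \<in> Yset" "v \<in> Yset"
  then obtain k1 e1 S1 k2 e2 S2 where u1: "u = (k1, e1, S1)" "v = (k2, e2, S2)"
    and c: "0 \<le> k2" "k2 < M" "S1 \<subseteq> {0..<int n}" "S2 \<subseteq> {0..<int n}" "odd (card S1) \<longleftrightarrow> e1" "odd (card S2) \<longleftrightarrow> e2"
    unfolding Yset_def carrier_groupA by auto
  have "u \<otimes>\<^bsub>A\<^esub> v \<in> carrier A" using uv groupA_mult_closed unfolding Yset_def by auto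
  moreover have "finite S1" "finite S2" using c finite_subset by auto
  moreover have "card (ha (k2, e2) ` S1) = card S1" using card_hact_image[OF c(1,2,3)] .
  ultimately show "u \<otimes>\<^bsub>A\<^esub> v \<in> Yset" unfolding u1 using c
    by (simp add: mult_groupA dih_mult_def in_Yset odd_card_symdiff)
qed

abbreviation "ea \<equiv> (1::int, False, {}::int set)"
abbreviation "ex \<equiv> (0::int, True, {}::int set)"
abbreviation "ey \<equiv> (1::int, True, {}::int set)"
abbreviation "ez \<equiv> (0::int, False, {0::int})"
abbreviation "ezx \<equiv> (0::int, True, {0::int})"

lemma elem_a_eq: "elem_a n l = ea"
  unfolding elem_a_def using M_gt_1 by simp

lemma y_eq: "ea \<otimes>\<^bsub>A\<^esub> ex = ey"
  and yx_eq: "ey \<otimes>\<^bsub>A\<^esub> ex = ea"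
  and zx_eq: "ez \<otimes>\<^bsub>A\<^esub> ex = ezx"
  using M_gt_1 by (simp_all add: mult_groupA dih_mult_def hact_def)

lemma ea_carrier: "ea \<in> carrier A"
  and ex_carrier: "ex \<in> carrier A"
  and ey_carrier: "ey \<in> carrier A"
  and ez_carrier: "ez \<in> carrier A"
  and ezx_carrier: "ezx \<in> carrier A"
  using M_gt_1 n_pos by (simp_all add: carrier_groupA)

lemma rot_in_generate:
  assumes a: "ea \<in> generate A X" and k: "0 \<le> k" "k < M"
  shows "(k, False, {}) \<in> generate A X"
proof -
  have "\<forall>t::nat. int t < M \<longrightarrow> (int t, False, {}) \<in> generate A X"
  proof
    fix t :: nat show "int t < M \<longrightarrow> (int t, False, {}) \<in> generate A X"
    proof (induction t)
      case 0 show ?case using generate.one[of A X] by (simp add: one_groupA)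
    next
      case (Suc t)
      show ?case
      proof
        assume lt: "int (Suc t) < M"
        then have "(int t, False, {}) \<in> generate A X" using Suc by simp
        then have "(int t, False, {}) \<otimes>\<^bsub>A\<^esub> ea \<in> generate A X" using a by (rule generate.eng)
        moreover have "(int t, False, {}) \<otimes>\<^bsub>A\<^esub> ea = (int (Suc t), False, {})"
          using lt by (simp add: mult_groupA dih_mult_def)
        ultimately show "(int (Suc t), False, {}) \<in> generate A X" by simp
      qed
    qed
  qed
  then show ?thesis using k by (metis int_nat_eq)
qed

lemma refl_in_generate:
  assumes a: "ea \<in> generate A X" and x: "ex \<in> generate A X" and k: "0 \<le> k" "k < M"
  shows "(k, True, {}) \<in> generate A X"
proof -
  have "(k, False, {}) \<otimes>\<^bsub>A\<^esub> ex \<in> generate A X" using rot_in_generate[OF a k] x by (rule generate.eng)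
  moreover have "(k, False, {}) \<otimes>\<^bsub>A\<^esub> ex = (k, True, {})" using k by (simp add: mult_groupA dih_mult_def)
  ultimately show ?thesis by simp
qed

lemma basis_in_generate:
  assumes a: "ea \<in> generate A X" and z: "ez \<in> generate A X" and i: "0 \<le> i" "i < int n"
  shows "(0, False, {i}) \<in> generate A X"
proof -
  have r: "0 \<le> (- i) mod M" "(- i) mod M < M" using M_pos M_gt_1 by auto
  have ir: "i < M" using i(2) n_le_M by linarith
  have "((- i) mod M, False, {}) \<otimes>\<^bsub>A\<^esub> ez \<otimes>\<^bsub>A\<^esub> (i, False, {}) \<in> generate A X"
    by (intro generate.eng rot_in_generate[OF a] z) (use r i ir in auto)
  moreover have "((- i) mod M, False, {}) \<otimes>\<^bsub>A\<^esub> ez \<otimes>\<^bsub>A\<^esub> (i, False, {}) = (0, False, {i})"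
  proof -
    have "((- i) mod M + i) mod M = (- i + i) mod M" by (rule mod_add_left_eq)
    then show ?thesis using i by (simp add: mult_groupA dih_mult_def hact_def)
  qed
  ultimately show ?thesis by simp
qed

lemma Xset_subset_generate:
  assumes a: "ea \<in> generate A X" and z: "ez \<in> generate A X"
  shows "Xset \<subseteq> generate A X"
proof
  fix u assume "u \<in> Xset"
  then obtain k S where u: "u = (k, False, S)" and c: "0 \<le> k" "k < M" "S \<subseteq> {0..<int n}"
    unfolding Xset_def carrier_groupA by auto
  have "finite S" using c(3) finite_subset by blast
  from this c(3) have "(k, False, S) \<in> generate A X"
  proof (induction S rule: finite_subset_induct')
    case empty show ?case using rot_in_generate[OF a c(1,2)] .
  next
    case (insert i S)
    have "(k, False, S) \<otimes>\<^bsub>A\<^esub> (0, False, {i}) \<in> generate A X"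
      using insert basis_in_generate[OF a z] by (intro generate.eng) auto
    moreover have "(k, False, S) \<otimes>\<^bsub>A\<^esub> (0, False, {i}) = (k, False, insert i S)"
    proof -
      have "ha (0, False) ` S = S"
      proof -
        have "ha (0, False) ` S = (\<lambda>s. s) ` S"
        proof (intro image_cong)
          fix s assume "s \<in> S"
          then have "0 \<le> s" "s < int n" using insert(3) by auto
          then show "ha (0, False) s = s" by (simp add: hact_def)
        qed simp
        then show ?thesis by simp
      qed
      moreover have "symdiff S {i} = insert i S" using insert(4) unfolding symdiff_def by blast
      ultimately show ?thesis using c by (simp add: mult_groupA dih_mult_def)
    qed
    ultimately show ?case by simp
  qed
  then show "u \<in> generate A X" using u by simp
qed

lemma carrier_subset_generate:
  assumes a: "ea \<in> generate A X" and z: "ez \<in> generate A X" and x: "ex \<in> generate A X"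
  shows "carrier A \<subseteq> generate A X"
proof
  fix u assume u: "u \<in> carrier A"
  then obtain k e S where u1: "u = (k, e, S)" and c: "0 \<le> k" "k < M" "S \<subseteq> {0..<int n}"
    using carrier_groupA by (cases u) auto
  show "u \<in> generate A X"
  proof (cases e)
    case False
    then show ?thesis using Xset_subset_generate[OF a z] u u1 by (auto simp: in_Xset)
  next
    case True
    have r: "((- k) mod M, False, S) \<in> Xset" using c M_pos M_gt_1 by (simp add: in_Xset carrier_groupA)
    have "ex \<otimes>\<^bsub>A\<^esub> ((- k) mod M, False, S) \<in> generate A X"
      using Xset_subset_generate[OF a z] r x by (intro generate.eng) auto
    moreover have "ex \<otimes>\<^bsub>A\<^esub> ((- k) mod M, False, S) = (k, True, S)"
    proof -
      have "(0 - (- k) mod M) mod M = (0 - - k) mod M" by (rule mod_diff_right_eq)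
      then show ?thesis using c by (simp add: mult_groupA dih_mult_def)
    qed
    ultimately show ?thesis using u1 True by simp
  qed
qed

lemma reflected_basis_in_generate:
  assumes a: "ea \<in> generate A X" and zx: "ezx \<in> generate A X" and j: "0 \<le> j" "j < int n"
  shows "(0, True, {j}) \<in> generate A X"
proof -
  have jM: "j < M" using j(2) n_le_M by linarith
  have "(j, False, {}) \<otimes>\<^bsub>A\<^esub> ezx \<otimes>\<^bsub>A\<^esub> (j, False, {}) \<in> generate A X"
    by (intro generate.eng rot_in_generate[OF a] zx) (use j jM in auto)
  moreover have "(j, False, {}) \<otimes>\<^bsub>A\<^esub> ezx \<otimes>\<^bsub>A\<^esub> (j, False, {}) = (0, True, {j})"
    using j jM by (simp add: mult_groupA dih_mult_def hact_def)
  ultimately show ?thesis by simp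
qed

lemma Yset_subset_generate:
  assumes a: "ea \<in> generate A X" and zx: "ezx \<in> generate A X"
  shows "Yset \<subseteq> generate A X"
proof
  fix u assume "u \<in> Yset"
  then obtain k e S where u: "u = (k, e, S)" and c: "0 \<le> k" "k < M" "S \<subseteq> {0..<int n}" "odd (card S) \<longleftrightarrow> e"
    unfolding Yset_def carrier_groupA by auto
  have "finite S" using c(3) finite_subset by blast
  from this c(3) c(1,2,4) have "(k, e, S) \<in> generate A X"
  proof (induction S arbitrary: k e rule: finite_subset_induct)
    case empty
    then show ?case using rot_in_generate[OF a] by simp
  next
    case (insert i S)
    \<comment> \<open>left multiplication by \<open>x v\<^sub>j\<close> adds one basis vector and flips the reflection bit\<close>
    define k' where "k' = (- k) mod M"
    have k'r: "0 \<le> k'" "k' < M" unfolding k'_def using M_pos M_gt_1 by auto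
    have ir: "0 \<le> i" "i < int n" using insert(2) by auto
    have "odd (card S) \<longleftrightarrow> \<not> e" using insert.hyps insert.prems(3) by simp
    then have IH: "(k', \<not> e, S) \<in> generate A X" using insert.IH[of k' "\<not> e"] k'r by simp
    define j where "j = ha (hi (k', \<not> e)) i"
    have jr: "0 \<le> j" "j < int n" unfolding j_def using hact_range by auto
    have hj: "ha (k', \<not> e) j = i" unfolding j_def using hact_dih_inv_left[OF k'r ir] .
    have "(0, True, {j}) \<otimes>\<^bsub>A\<^esub> (k', \<not> e, S) \<in> generate A X"
      using reflected_basis_in_generate[OF a zx jr] IH by (rule generate.eng)
    moreover have "(0, True, {j}) \<otimes>\<^bsub>A\<^esub> (k', \<not> e, S) = (k, e, insert i S)"
    proof -
      have "(0 - k') mod M = (0 - - k) mod M" unfolding k'_def by (rule mod_diff_right_eq)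
      then have "(0 - k') mod M = k" using insert.prems(1,2) by simp
      moreover have "symdiff {i} S = insert i S" using insert.hyps unfolding symdiff_def by blast
      ultimately show ?thesis using hj by (simp add: mult_groupA dih_mult_def)
    qed
    ultimately show ?case by simp
  qed
  then show "u \<in> generate A X" using u by simp
qed

lemma generate_x_y: "generate A {ex, ey} = Hset"
proof
  show "generate A {ex, ey} \<subseteq> Hset" using M_pos M_gt_1 by (intro group.generate_subgroup_incl[OF group_A] subgroup_Hset) (auto simp: in_Hset)
  have a: "ea \<in> generate A {ex, ey}"
    using generate.eng[OF generate.incl generate.incl, of "ey" "{ex, ey}" ex A] yx_eq by simp
  have x: "ex \<in> generate A {ex, ey}" by (rule generate.incl) simp
  show "Hset \<subseteq> generate A {ex, ey}"
  proof
    fix u assume "u \<in> Hset"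
    then obtain k e where u: "u = (k, e, {})" "0 \<le> k" "k < M" unfolding Hset_def by auto
    then show "u \<in> generate A {ex, ey}" using rot_in_generate[OF a] refl_in_generate[OF a x] by (cases e) auto
  qed
qed

lemma Jset_elements: "u \<in> Jset \<Longrightarrow> u \<in> {(0, False, {}), ex, ez, ezx}"
proof -
  assume "u \<in> Jset"
  then obtain e S where u: "u = (0, e, S)" "S \<subseteq> {0}" unfolding Jset_def by auto
  then have "S = {} \<or> S = {0}" by blast
  then show ?thesis using u by (cases e) auto
qed

lemma generate_x_z: "generate A {ex, ez} = Jset"
proof
  show "generate A {ex, ez} \<subseteq> Jset" by (intro group.generate_subgroup_incl[OF group_A] subgroup_Jset) (auto simp: in_Jset)
  have x: "ex \<in> generate A {ex, ez}" and z: "ez \<in> generate A {ex, ez}" by (auto intro: generate.incl)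
  have "ez \<otimes>\<^bsub>A\<^esub> ex \<in> generate A {ex, ez}" using z x by (rule generate.eng)
  then have zx: "ezx \<in> generate A {ex, ez}" using zx_eq by simp
  have o: "(0, False, {}) \<in> generate A {ex, ez}" using generate.one[of A] by (simp add: one_groupA)
  show "Jset \<subseteq> generate A {ex, ez}" using Jset_elements x z zx o by blast
qed

lemma generate_a: "generate A {ea} = Hset \<inter> Xset"
proof
  show "generate A {ea} \<subseteq> Hset \<inter> Xset" using M_pos M_gt_1
    by (intro group.generate_subgroup_incl[OF group_A] group.subgroups_Inter_pair[OF group_A] subgroup_Hset subgroup_Xset) (auto simp: in_Hset in_Xset carrier_groupA)
  have a: "ea \<in> generate A {ea}" by (rule generate.incl) simp
  show "Hset \<inter> Xset \<subseteq> generate A {ea}"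
  proof
    fix u assume "u \<in> Hset \<inter> Xset"
    then obtain k where u: "u = (k, False, {})" "0 \<le> k" "k < M" unfolding Hset_def Xset_def by auto
    then show "u \<in> generate A {ea}" using rot_in_generate[OF a] by auto
  qed
qed

lemma generate_z: "generate A {ez} = Jset \<inter> Xset"
proof
  show "generate A {ez} \<subseteq> Jset \<inter> Xset"
    by (intro group.generate_subgroup_incl[OF group_A] group.subgroups_Inter_pair[OF group_A] subgroup_Jset subgroup_Xset) (auto simp: in_Jset in_Xset ez_carrier)
  have z: "ez \<in> generate A {ez}" by (rule generate.incl) simp
  have o: "(0, False, {}) \<in> generate A {ez}" using generate.one[of A] by (simp add: one_groupA)
  show "Jset \<inter> Xset \<subseteq> generate A {ez}"
  proof
    fix u assume u: "u \<in> Jset \<inter> Xset"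
    then have "u \<in> {(0, False, {}), ex, ez, ezx}" using Jset_elements by blast
    moreover have "u \<noteq> ex" "u \<noteq> ezx" using u unfolding Xset_def by auto
    ultimately show "u \<in> generate A {ez}" using z o by blast
  qed
qed

lemma generate_zx: "generate A {ezx} = Jset \<inter> Yset"
proof
  show "generate A {ezx} \<subseteq> Jset \<inter> Yset"
    by (intro group.generate_subgroup_incl[OF group_A] group.subgroups_Inter_pair[OF group_A] subgroup_Jset subgroup_Yset) (auto simp: in_Jset in_Yset ezx_carrier)
  have z: "ezx \<in> generate A {ezx}" by (rule generate.incl) simp
  have o: "(0, False, {}) \<in> generate A {ezx}" using generate.one[of A] by (simp add: one_groupA)
  show "Jset \<inter> Yset \<subseteq> generate A {ezx}"
  proof
    fix u assume u: "u \<in> Jset \<inter> Yset"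
    then have "u \<in> {(0, False, {}), ex, ez, ezx}" using Jset_elements by blast
    moreover have "u \<noteq> ex" "u \<noteq> ez" using u unfolding Yset_def by auto
    ultimately show "u \<in> generate A {ezx}" using z o by blast
  qed
qed

lemma generate_a_z: "generate A {ea, ez} = Xset"
proof
  show "generate A {ea, ez} \<subseteq> Xset" using ea_carrier ez_carrier by (intro group.generate_subgroup_incl[OF group_A] subgroup_Xset) (auto simp: in_Xset)
  show "Xset \<subseteq> generate A {ea, ez}" by (rule Xset_subset_generate) (auto intro: generate.incl)
qed

lemma generate_a_zx: "generate A {ea, ezx} = Yset"
proof
  show "generate A {ea, ezx} \<subseteq> Yset" using ea_carrier ezx_carrier by (intro group.generate_subgroup_incl[OF group_A] subgroup_Yset) (auto simp: in_Yset)
  show "Yset \<subseteq> generate A {ea, ezx}" by (rule Yset_subset_generate) (auto intro: generate.incl)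
qed

lemma generate_x_y_z: "generate A {ex, ey, ez} = carrier A"
proof
  show "generate A {ex, ey, ez} \<subseteq> carrier A" using ex_carrier ez_carrier M_pos M_gt_1
    by (intro group.generate_incl[OF group_A]) (auto simp: carrier_groupA)
  have a: "ea \<in> generate A {ex, ey, ez}"
    using generate.eng[OF generate.incl generate.incl, of "ey" "{ex, ey, ez}" ex A] yx_eq by simp
  show "carrier A \<subseteq> generate A {ex, ey, ez}" by (rule carrier_subset_generate[OF a]) (auto intro: generate.incl)
qed

lemma Hset_Int_Xset_eq_Yset: "Hset \<inter> Xset = Hset \<inter> Yset"
  unfolding Hset_def Xset_def Yset_def by auto

lemma Jset_Hset_mult_in_JH: "j \<in> Jset \<Longrightarrow> h \<in> Hset \<Longrightarrow> j \<otimes>\<^bsub>A\<^esub> h \<in> JH"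
proof -
  assume j: "j \<in> Jset" and h: "h \<in> Hset"
  obtain e' T where j1: "j = (0, e', T)" "T \<subseteq> {0}" using j unfolding Jset_def by auto
  obtain k e where h1: "h = (k, e, {})" "0 \<le> k" "k < M" using h unfolding Hset_def by auto
  obtain d1 d2 where d: "dih (0, e') (k, e) = (d1, d2)" by fastforce
  have c: "j \<otimes>\<^bsub>A\<^esub> h \<in> carrier A" using j h subgroup_Jset subgroup_Hset
    by (intro groupA_mult_closed) (auto dest: subgroup.subset)
  have "ha (d1, d2) 0 = ha (k, e) 0" using hact_dih_mult[of n l "(0, e')" "(k, e)" 0] d by (simp add: hact_zero)
  moreover have "ha (k, e) ` T \<subseteq> {ha (k, e) 0}" using j1 by auto
  ultimately show ?thesis using c unfolding j1 h1 by (simp add: mult_groupA d in_JH)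
qed

lemma JH_cases:
  assumes "u \<in> JH"
  obtains k e where "u = (k, e, {})" "0 \<le> k" "k < M"
    | k e where "u = (k, e, {ha (k, e) 0})" "0 \<le> k" "k < M"
proof -
  obtain k e S where u: "u = (k, e, S)" "0 \<le> k" "k < M" "S \<subseteq> {ha (k, e) 0}"
    using assms unfolding JH_def carrier_groupA by auto
  then have "S = {} \<or> S = {ha (k, e) 0}" by blast
  then show ?thesis using that u by blast
qed

lemma set_mult_Jset_Hset_restrict:
  assumes K: "subgroup K A"
    and factor: "\<And>k e. 0 \<le> k \<Longrightarrow> k < M \<Longrightarrow> (k, e, {ha (k, e) 0}) \<in> K \<Longrightarrow>
                   \<exists>j\<in>Jset \<inter> K. \<exists>h\<in>Hset \<inter> K. (k, e, {ha (k, e) 0}) = j \<otimes>\<^bsub>A\<^esub> h"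
  shows "(Jset \<inter> K) <#>\<^bsub>A\<^esub> (Hset \<inter> K) = JH \<inter> K"
proof
  show "(Jset \<inter> K) <#>\<^bsub>A\<^esub> (Hset \<inter> K) \<subseteq> JH \<inter> K"
    using Jset_Hset_mult_in_JH subgroup.m_closed[OF K] unfolding set_mult_def by blast
  show "JH \<inter> K \<subseteq> (Jset \<inter> K) <#>\<^bsub>A\<^esub> (Hset \<inter> K)"
  proof
    fix u assume u: "u \<in> JH \<inter> K"
    then have "u \<in> JH" by simp
    then show "u \<in> (Jset \<inter> K) <#>\<^bsub>A\<^esub> (Hset \<inter> K)"
    proof (cases rule: JH_cases)
      case (1 k e)
      then have "u = \<one>\<^bsub>A\<^esub> \<otimes>\<^bsub>A\<^esub> u" by (simp add: one_groupA mult_groupA dih_mult_def)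
      moreover have "\<one>\<^bsub>A\<^esub> \<in> Jset \<inter> K" using subgroup.one_closed[OF K] by (simp add: one_groupA in_Jset)
      moreover have "u \<in> Hset \<inter> K" using 1 u by (simp add: in_Hset)
      ultimately show ?thesis unfolding set_mult_iff by blast
    next
      case (2 k e)
      then show ?thesis using factor u unfolding set_mult_iff by simp
    qed
  qed
qed

lemma set_mult_Jset_Hset_carrier: "(Jset \<inter> carrier A) <#>\<^bsub>A\<^esub> (Hset \<inter> carrier A) = JH \<inter> carrier A"
proof (rule set_mult_Jset_Hset_restrict[OF group.subgroup_self[OF group_A]])
  fix k e assume "0 \<le> k" "k < M"
  then have "(k, e, {ha (k, e) 0}) = ez \<otimes>\<^bsub>A\<^esub> (k, e, {})" by (simp add: mult_groupA dih_mult_def)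
  moreover have "(k, e, {}) \<in> Hset \<inter> carrier A" using \<open>0 \<le> k\<close> \<open>k < M\<close> by (simp add: in_Hset carrier_groupA)
  moreover have "ez \<in> Jset \<inter> carrier A" using ez_carrier by (simp add: in_Jset)
  ultimately show "\<exists>j\<in>Jset \<inter> carrier A. \<exists>h\<in>Hset \<inter> carrier A. (k, e, {ha (k, e) 0}) = j \<otimes>\<^bsub>A\<^esub> h"
    by blast
qed

lemma set_mult_Jset_Hset_Xset: "(Jset \<inter> Xset) <#>\<^bsub>A\<^esub> (Hset \<inter> Xset) = JH \<inter> Xset"
proof (rule set_mult_Jset_Hset_restrict[OF subgroup_Xset])
  fix k e assume k: "0 \<le> k" "k < M" and "(k, e, {ha (k, e) 0}) \<in> Xset"
  then have "\<not> e" by (simp add: in_Xset)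
  have "(k, e, {ha (k, e) 0}) = ez \<otimes>\<^bsub>A\<^esub> (k, e, {})" using k by (simp add: mult_groupA dih_mult_def)
  moreover have "(k, e, {}) \<in> Hset \<inter> Xset" using k \<open>\<not> e\<close> by (simp add: in_Hset in_Xset carrier_groupA)
  moreover have "ez \<in> Jset \<inter> Xset" using ez_carrier by (simp add: in_Jset in_Xset)
  ultimately show "\<exists>j\<in>Jset \<inter> Xset. \<exists>h\<in>Hset \<inter> Xset. (k, e, {ha (k, e) 0}) = j \<otimes>\<^bsub>A\<^esub> h"
    by blast
qed

lemma set_mult_Jset_Hset_Yset: "(Jset \<inter> Yset) <#>\<^bsub>A\<^esub> (Hset \<inter> Yset) = JH \<inter> Yset"
proof (rule set_mult_Jset_Hset_restrict[OF subgroup_Yset])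
  fix k e assume k: "0 \<le> k" "k < M" and "(k, e, {ha (k, e) 0}) \<in> Yset"
  then have e: "e" by (simp add: in_Yset)
  have "(0 - (- k) mod M) mod M = k" using k mod_diff_right_eq[of 0 "- k" M] by simp
  then have "(k, e, {ha (k, e) 0}) = ezx \<otimes>\<^bsub>A\<^esub> ((- k) mod M, False, {})"
    using e by (simp add: mult_groupA dih_mult_def hact_def mod_mult_mod_left)
  moreover have "((- k) mod M, False, {}) \<in> Hset \<inter> Yset" using M_pos by (simp add: in_Hset in_Yset carrier_groupA)
  moreover have "ezx \<in> Jset \<inter> Yset" using ezx_carrier by (simp add: in_Jset in_Yset)
  ultimately show "\<exists>j\<in>Jset \<inter> Yset. \<exists>h\<in>Hset \<inter> Yset. (k, e, {ha (k, e) 0}) = j \<otimes>\<^bsub>A\<^esub> h"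
    by blast
qed

lemma flag_regular_triple_A: "flag_regular_triple A ex ey ez"
proof -
  have inv_x: "involution A ex" unfolding involution_def using ex_carrier by (simp add: one_groupA mult_groupA dih_mult_def)
  have inv_y: "involution A ey" unfolding involution_def using ey_carrier by (simp add: one_groupA mult_groupA dih_mult_def)
  have inv_z: "involution A ez" unfolding involution_def using ez_carrier by (simp add: one_groupA mult_groupA dih_mult_def hact_def)
  have comm: "ex \<otimes>\<^bsub>A\<^esub> ez = ez \<otimes>\<^bsub>A\<^esub> ex" by (simp add: mult_groupA dih_mult_def hact_def)
  have notin: "ez \<notin> generate A {ex, ey}" unfolding generate_x_y by (simp add: in_Hset)
  have o1: "group.ord A (ex \<otimes>\<^bsub>A\<^esub> ey) \<noteq> 0"
    using group.ord_ge_1[OF group_A finite_carrier_A groupA_mult_closed[OF ex_carrier ey_carrier]] by simp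
  have o2: "group.ord A (ey \<otimes>\<^bsub>A\<^esub> ez) \<noteq> 0"
    using group.ord_ge_1[OF group_A finite_carrier_A groupA_mult_closed[OF ey_carrier ez_carrier]] by simp
  show ?thesis unfolding flag_regular_triple_def
    using group_A inv_x inv_y inv_z comm notin o1 o2 generate_x_y_z by simp
qed

end

section \<open>Labelling the cosets by the hypercube\<close>

lemma inj_on_nat_nonneg: "inj_on nat {0::int..}"
  by (rule inj_onI) simp

lemma nat_image_eq_iff: "X \<subseteq> {0..} \<Longrightarrow> Y \<subseteq> {0..} \<Longrightarrow> nat ` X = nat ` Y \<longleftrightarrow> X = Y"
  by (rule inj_on_image_eq_iff[OF inj_on_nat_nonneg]) simp_all

lemma nat_image_symdiff:
  "X \<subseteq> {0..} \<Longrightarrow> Y \<subseteq> {0..} \<Longrightarrow> nat ` symdiff X Y = symdiff (nat ` X) (nat ` Y)"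
  by (rule image_symdiff, rule inj_on_subset[OF inj_on_nat_nonneg]) auto

lemma nat_image_subset_singleton_iff: "D \<subseteq> {0..} \<Longrightarrow> 0 \<le> p \<Longrightarrow> nat ` D \<subseteq> {nat p} \<longleftrightarrow> D \<subseteq> {p}"
  by (auto simp: subset_iff eq_nat_nat_iff)

context cube_group
begin

text \<open>The image of 0 under \<open>a\<^sup>k x\<^sup>e\<close> acting on \<open>\<int>/M\<close> as hact does on \<open>\<int>/n\<close>; its quotient by
  n is the label of the parallel edge.\<close>

definition image_zero :: "int \<times> bool \<Rightarrow> int" where
  "image_zero h = (if snd h then (- fst h) mod M else fst h)"

fun vertex_label :: "int \<times> bool \<times> int set \<Rightarrow> nat set" where
  "vertex_label (k, e, S) = nat ` S"

fun edge_label :: "int \<times> bool \<times> int set \<Rightarrow> nat set set \<times> nat" where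
  "edge_label (k, e, S) =
     ({nat ` S, symdiff (nat ` S) {nat (ha (k, e) 0)}}, nat (image_zero (k, e) div int n))"

lemma image_zero_range: "0 \<le> k \<Longrightarrow> k < M \<Longrightarrow> 0 \<le> image_zero (k, e) \<and> image_zero (k, e) < M"
  unfolding image_zero_def using M_pos by simp

lemma hact_zero_eq_image_zero_mod: "ha (k, e) 0 = image_zero (k, e) mod int n"
  unfolding hact_def image_zero_def by (simp add: mod_mult_mod_left)

lemma diff_mod_eq_0_iff:
  assumes "0 \<le> a" "a < M" "0 \<le> b" "b < M"
  shows "(a - b) mod M = 0 \<longleftrightarrow> a = b"
proof -
  have "(a - b) mod M = 0 \<longleftrightarrow> a mod M = b mod M" by (simp add: mod_eq_dvd_iff dvd_eq_mod_eq_0)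
  then show ?thesis using assms by simp
qed

lemma add_mod_eq_0_iff:
  assumes "0 \<le> a" "a < M"
  shows "(a + b) mod M = 0 \<longleftrightarrow> a = (- b) mod M"
proof -
  have "(a + b) mod M = 0 \<longleftrightarrow> a mod M = (- b) mod M" by (simp add: mod_eq_dvd_iff dvd_eq_mod_eq_0)
  then show ?thesis using assms by simp
qed

lemma minus_mod_eq_iff:
  assumes "0 \<le> a" "a < M" "0 \<le> b" "b < M"
  shows "(- a) mod M = (- b) mod M \<longleftrightarrow> a = b"
proof -
  have "(- a) mod M = (- b) mod M \<longleftrightarrow> M dvd (a - b)" by (simp add: mod_eq_dvd_iff dvd_diff_commute)
  also have "\<dots> \<longleftrightarrow> a mod M = b mod M" by (simp add: mod_eq_dvd_iff)
  finally show ?thesis using assms by simp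
qed

lemma dih_quotient_zero_iff:
  assumes "0 \<le> k1" "k1 < M" "0 \<le> k2" "k2 < M"
  shows "fst (dih (k2, e2) (hi (k1, e1))) = 0 \<longleftrightarrow> image_zero (k1, e1) = image_zero (k2, e2)"
proof (cases e1; cases e2)
  assume "e1" "e2"
  then show ?thesis
    using assms by (simp add: dih_mult_def dih_inv_def image_zero_def diff_mod_eq_0_iff minus_mod_eq_iff; blast)
next
  assume "e1" "\<not> e2"
  then show ?thesis
    using assms add_mod_eq_0_iff[of k2 k1] by (simp add: dih_mult_def dih_inv_def image_zero_def add.commute; blast)
next
  assume "\<not> e1" "e2"
  then have "fst (dih (k2, e2) (hi (k1, e1))) = (k2 + k1) mod M"
    by (simp add: dih_mult_def dih_inv_def mod_simps)
  then show ?thesis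
    using assms add_mod_eq_0_iff[of k1 k2] \<open>\<not> e1\<close> \<open>e2\<close> by (simp add: image_zero_def add.commute; blast)
next
  assume "\<not> e1" "\<not> e2"
  then have "fst (dih (k2, e2) (hi (k1, e1))) = (k2 - k1) mod M"
    by (simp add: dih_mult_def dih_inv_def mod_simps)
  then show ?thesis
    using assms diff_mod_eq_0_iff[of k2 k1] \<open>\<not> e1\<close> \<open>\<not> e2\<close> by (auto simp: image_zero_def)
qed

lemma vertex_label_eq_iff:
  assumes u: "u \<in> carrier A" and v: "v \<in> carrier A"
  shows "v \<otimes>\<^bsub>A\<^esub> inv\<^bsub>A\<^esub> u \<in> Hset \<longleftrightarrow> vertex_label u = vertex_label v"
proof -
  obtain k1 e1 S1 k2 e2 S2 where uv: "u = (k1, e1, S1)" "v = (k2, e2, S2)" by (metis prod.exhaust)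
  have "S1 \<subseteq> {0..}" "S2 \<subseteq> {0..}" using u v uv by (auto simp: carrier_groupA)
  then show ?thesis
    using u v unfolding uv by (simp add: mult_inv_groupA in_Hset dih_range symdiff_empty_iff nat_image_eq_iff; blast)
qed

lemma edge_label_eq_iff:
  assumes u: "u \<in> carrier A" and v: "v \<in> carrier A"
  shows "v \<otimes>\<^bsub>A\<^esub> inv\<^bsub>A\<^esub> u \<in> Jset \<longleftrightarrow> edge_label u = edge_label v"
proof -
  obtain k1 e1 S1 k2 e2 S2 where uv: "u = (k1, e1, S1)" "v = (k2, e2, S2)" by (metis prod.exhaust)
  have c: "0 \<le> k1" "k1 < M" "0 \<le> k2" "k2 < M" "S1 \<subseteq> {0..<int n}" "S2 \<subseteq> {0..<int n}"
    using u v uv carrier_groupA by auto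
  define p1 where "p1 = ha (k1, e1) 0"
  define p2 where "p2 = ha (k2, e2) 0"
  define j1 where "j1 = image_zero (k1, e1) div int n"
  define j2 where "j2 = image_zero (k2, e2) div int n"
  have p: "0 \<le> p1" "p1 < int n" "0 \<le> p2" using hact_range p1_def p2_def by auto
  have j: "0 \<le> j1" "0 \<le> j2"
    using image_zero_range[OF c(1,2), of e1] image_zero_range[OF c(3,4), of e2] n_pos
    unfolding j1_def j2_def by (simp_all add: pos_imp_zdiv_nonneg_iff)
  have D: "symdiff S2 S1 \<subseteq> {0..<int n}" using c by (intro symdiff_subset)
  have "ha (hi (k1, e1)) p1 = 0" unfolding p1_def using hact_dih_inv_right[OF c(1,2), of 0 e1] n_pos by simp
  moreover obtain k e where "hi (k1, e1) = (k, e)" "0 \<le> k" "k < M" using dih_inv_pair[OF c(1,2)] .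
  ultimately have quot_J: "ha (hi (k1, e1)) ` symdiff S2 S1 \<subseteq> {0} \<longleftrightarrow> symdiff S2 S1 \<subseteq> {p1}"
    using hact_image_subset_singleton_iff[OF _ _ D p(1,2)] by metis
  have "v \<otimes>\<^bsub>A\<^esub> inv\<^bsub>A\<^esub> u \<in> Jset \<longleftrightarrow>
        fst (dih (k2, e2) (hi (k1, e1))) = 0 \<and> ha (hi (k1, e1)) ` symdiff S2 S1 \<subseteq> {0}"
    using u v unfolding uv by (simp add: mult_inv_groupA in_Jset)
  also have "\<dots> \<longleftrightarrow> image_zero (k1, e1) = image_zero (k2, e2) \<and> symdiff S2 S1 \<subseteq> {p1}"
    using dih_quotient_zero_iff[OF c(1-4)] quot_J by simp
  also have "\<dots> \<longleftrightarrow> (p1 = p2 \<and> symdiff S2 S1 \<subseteq> {p1}) \<and> j1 = j2"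
    unfolding p1_def p2_def j1_def j2_def hact_zero_eq_image_zero_mod by (metis div_mult_mod_eq)
  also have "\<dots> \<longleftrightarrow> (nat p1 = nat p2 \<and> symdiff (nat ` S2) (nat ` S1) \<subseteq> {nat p1}) \<and> nat j1 = nat j2"
  proof -
    have "symdiff (nat ` S2) (nat ` S1) = nat ` symdiff S2 S1"
      using c(5,6) by (intro nat_image_symdiff[symmetric]) auto
    then have "symdiff (nat ` S2) (nat ` S1) \<subseteq> {nat p1} \<longleftrightarrow> symdiff S2 S1 \<subseteq> {p1}"
      using nat_image_subset_singleton_iff[of "symdiff S2 S1" p1] D p(1) by (simp add: subset_iff)
    then show ?thesis using p j by (simp add: eq_nat_nat_iff)
  qed
  also have "\<dots> \<longleftrightarrow> edge_label u = edge_label v"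
    unfolding uv edge_label.simps p1_def p2_def j1_def j2_def by (simp add: symdiff_edge_eq_iff)
  finally show ?thesis .
qed

lemma JH_iff_incident:
  assumes u: "u \<in> carrier A" and v: "v \<in> carrier A"
  shows "v \<otimes>\<^bsub>A\<^esub> inv\<^bsub>A\<^esub> u \<in> JH \<longleftrightarrow> vertex_label u \<in> fst (edge_label v)"
proof -
  obtain k1 e1 S1 k2 e2 S2 where uv: "u = (k1, e1, S1)" "v = (k2, e2, S2)" by (metis prod.exhaust)
  have c: "0 \<le> k1" "k1 < M" "S1 \<subseteq> {0..<int n}" "S2 \<subseteq> {0..<int n}"
    using u v uv carrier_groupA by auto
  define p2 where "p2 = ha (k2, e2) 0"
  have p2: "0 \<le> p2" "p2 < int n" using hact_range p2_def by auto
  have D: "symdiff S2 S1 \<subseteq> {0..<int n}" using c by (intro symdiff_subset)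
  obtain k e where h: "hi (k1, e1) = (k, e)" "0 \<le> k" "k < M" using dih_inv_pair[OF c(1,2)] .
  have "v \<otimes>\<^bsub>A\<^esub> inv\<^bsub>A\<^esub> u \<in> carrier A"
    using u v group.inv_closed[OF group_A] groupA_mult_closed by simp
  then have "v \<otimes>\<^bsub>A\<^esub> inv\<^bsub>A\<^esub> u \<in> JH \<longleftrightarrow>
        ha (hi (k1, e1)) ` symdiff S2 S1 \<subseteq> {ha (dih (k2, e2) (hi (k1, e1))) 0}"
    using u v unfolding uv by (simp add: mult_inv_groupA in_JH)
  also have "\<dots> \<longleftrightarrow> symdiff S2 S1 \<subseteq> {p2}"
    unfolding hact_dih_mult p2_def[symmetric] h(1) by (rule hact_image_subset_singleton_iff[OF h(2,3) D p2])
  also have "\<dots> \<longleftrightarrow> symdiff (nat ` S2) (nat ` S1) \<subseteq> {nat p2}"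
  proof -
    have "symdiff (nat ` S2) (nat ` S1) = nat ` symdiff S2 S1"
      using c(3,4) by (intro nat_image_symdiff[symmetric]) auto
    then show ?thesis using nat_image_subset_singleton_iff[of "symdiff S2 S1" p2] D p2(1) by (simp add: subset_iff)
  qed
  also have "\<dots> \<longleftrightarrow> vertex_label u \<in> fst (edge_label v)"
    unfolding uv p2_def by (simp add: symdiff_subset_singleton_iff)
  finally show ?thesis .
qed

lemma edge_label_in_edges:
  assumes u: "u \<in> carrier A"
  shows "edge_label u \<in> edges (hypercube_mult n l)"
proof -
  obtain k e S where u1: "u = (k, e, S)" by (cases u)
  have c: "0 \<le> k" "k < M" "S \<subseteq> {0..<int n}" using u u1 carrier_groupA by auto
  have "nat (ha (k, e) 0) < n" using hact_range[of "(k, e)" 0] by linarith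
  moreover have "nat (image_zero (k, e) div int n) < l"
  proof -
    define z where "z = image_zero (k, e)"
    have z: "0 \<le> z" "z < int n * int l" using image_zero_range[OF c(1,2)] unfolding z_def by auto
    have "int n * (z div int n) \<le> z"
      using mult_div_mod_eq[of "int n" z] pos_mod_sign[OF n_pos, of z] by linarith
    then have "int n * (z div int n) < int n * int l" using z(2) by linarith
    then have "z div int n < int l" using n_pos by simp
    moreover have "0 \<le> z div int n" using z(1) n_pos by (simp add: pos_imp_zdiv_nonneg_iff)
    ultimately show ?thesis unfolding z_def by (simp add: nat_less_iff)
  qed
  moreover have "nat ` S \<subseteq> {..<n}" using c(3) by force
  ultimately show ?thesis unfolding u1 edge_label.simps by (rule hypercube_mult_edgeI[rotated])
qed

text \<open>The rotation part of the witness maps 0 to \<open>n j + i\<close> in \<open>\<int>/M\<close>, which yields the edge label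
  \<open>({S, S \<triangle> {i}}, j)\<close>; the reflection bit e is free.\<close>

definition edge_witness :: "nat set \<Rightarrow> nat \<Rightarrow> nat \<Rightarrow> bool \<Rightarrow> int \<times> bool \<times> int set" where
  "edge_witness S i j e =
     (if e then (- (int n * int j + int i)) mod M else int n * int j + int i, e, int ` S)"

lemma edge_witness:
  assumes S: "S \<subseteq> {..<n}" and i: "i < n" and j: "j < l"
  shows "edge_witness S i j e \<in> carrier A" and "edge_label (edge_witness S i j e) = ({S, symdiff S {i}}, j)"
proof -
  define k where "k = int n * int j + int i"
  have k: "0 \<le> k" "k < M"
  proof -
    have "int n * (int j + 1) \<le> int n * int l" using j by (intro mult_left_mono) auto
    then show "k < M" unfolding k_def using i by (simp add: algebra_simps)
  qed (simp add: k_def)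
  have image_zero: "image_zero (if e then (- k) mod M else k, e) = k"
    unfolding image_zero_def using k by (cases e) (simp_all add: mod_minus_eq)
  have k_div_mod: "k div int n = int j" "k mod int n = int i" unfolding k_def using i n_pos by auto
  show "edge_witness S i j e \<in> carrier A"
    unfolding edge_witness_def k_def[symmetric] carrier_groupA using k S M_pos by auto
  show "edge_label (edge_witness S i j e) = ({S, symdiff S {i}}, j)"
    unfolding edge_witness_def k_def[symmetric] edge_label.simps hact_zero_eq_image_zero_mod image_zero
    by (simp add: k_div_mod image_image)
qed

lemma edge_witness_zero: "edge_witness T 0 0 e = (0, e, int ` T)"
  unfolding edge_witness_def by simp

lemma label_images:
  assumes K: "K \<subseteq> carrier A"
    and witness: "\<And>S i j. S \<subseteq> {..<n} \<Longrightarrow> i < n \<Longrightarrow> j < l \<Longrightarrow> \<exists>e. edge_witness S i j e \<in> K"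
  shows "vertex_label ` K = verts (hypercube_mult n l)" and "edge_label ` K = edges (hypercube_mult n l)"
proof -
  have "vertex_label u \<subseteq> {..<n}" if "u \<in> K" for u
    using that K by (cases u) (force simp: carrier_groupA)
  moreover have "T \<in> vertex_label ` K" if T: "T \<subseteq> {..<n}" for T
  proof -
    obtain e where "edge_witness T 0 0 e \<in> K" using witness[OF T] n_gt_1 l_pos by auto
    then show ?thesis unfolding edge_witness_zero by (force simp: image_image)
  qed
  ultimately show "vertex_label ` K = verts (hypercube_mult n l)" by auto
  have "E \<in> edge_label ` K" if E_edge: "E \<in> edges (hypercube_mult n l)" for E
  proof -
    obtain S i j where c: "S \<subseteq> {..<n}" "i < n" "j < l" and E: "E = ({S, symdiff S {i}}, j)"
      using E_edge by (rule hypercube_mult_edgeE)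
    obtain e where e: "edge_witness S i j e \<in> K" using witness[OF c] by blast
    have "E = edge_label (edge_witness S i j e)" using edge_witness(2)[OF c] E by simp
    with e show ?thesis by blast
  qed
  then show "edge_label ` K = edges (hypercube_mult n l)"
    using K edge_label_in_edges by auto
qed

lemma hypercube_iso_cos_graph:
  assumes K: "subgroup K A" and JH_K: "(Jset \<inter> K) <#>\<^bsub>A\<^esub> (Hset \<inter> K) = JH \<inter> K"
    and witness: "\<And>S i j. S \<subseteq> {..<n} \<Longrightarrow> i < n \<Longrightarrow> j < l \<Longrightarrow> \<exists>e. edge_witness S i j e \<in> K"
  shows "incgraph_iso (hypercube_mult n l) (cos_graph (A\<lparr>carrier := K\<rparr>) (Hset \<inter> K) (Jset \<inter> K))"
proof -
  have Kc: "K \<subseteq> carrier A" using K by (rule subgroup.subset)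
  have labels: "vertex_label ` K = verts (hypercube_mult n l)" "edge_label ` K = edges (hypercube_mult n l)"
    using label_images[OF Kc] witness by blast+
  show ?thesis
  proof (rule group.incgraph_iso_cos_graph_subgroupI[OF group_A K subgroup_Hset subgroup_Jset JH_K labels])
    show "v \<otimes>\<^bsub>A\<^esub> inv\<^bsub>A\<^esub> u \<in> JH \<longleftrightarrow> inc (hypercube_mult n l) (vertex_label u) (edge_label v)"
      if "u \<in> K" "v \<in> K" for u v
    proof -
      have "u \<in> carrier A" "v \<in> carrier A" using that Kc by auto
      then show ?thesis by (simp only: inc_hypercube_mult JH_iff_incident)
    qed
  qed (use vertex_label_eq_iff edge_label_eq_iff Kc in blast)+
qed

end

context cube_group
begin

lemma hypercube_iso_cos_graph_A: "incgraph_iso (hypercube_mult n l) (cos_graph A Hset Jset)"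
proof -
  have "incgraph_iso (hypercube_mult n l) (cos_graph (A\<lparr>carrier := carrier A\<rparr>) (Hset \<inter> carrier A) (Jset \<inter> carrier A))"
  proof (rule hypercube_iso_cos_graph)
    show "subgroup (carrier A) A" by (rule group.subgroup_self[OF group_A])
  qed (use set_mult_Jset_Hset_carrier edge_witness(1) in blast)+
  moreover have "A\<lparr>carrier := carrier A\<rparr> = A" by (simp add: groupA_def)
  ultimately show ?thesis
    using subgroup.subset[OF subgroup_Hset] subgroup.subset[OF subgroup_Jset] by (simp add: Int_absorb2)
qed

lemma hypercube_iso_cos_graph_X:
  "incgraph_iso (hypercube_mult n l) (cos_graph (A\<lparr>carrier := Xset\<rparr>) (Hset \<inter> Xset) (Jset \<inter> Xset))"
proof (rule hypercube_iso_cos_graph[OF subgroup_Xset set_mult_Jset_Hset_Xset])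
  fix S i j assume "S \<subseteq> {..<n}" "i < n" "j < l"
  then have "edge_witness S i j False \<in> Xset"
    using edge_witness(1)[of S i j False] by (simp add: edge_witness_def in_Xset)
  then show "\<exists>e. edge_witness S i j e \<in> Xset" ..
qed

lemma hypercube_iso_cos_graph_Y:
  "incgraph_iso (hypercube_mult n l) (cos_graph (A\<lparr>carrier := Yset\<rparr>) (Hset \<inter> Yset) (Jset \<inter> Yset))"
proof (rule hypercube_iso_cos_graph[OF subgroup_Yset set_mult_Jset_Hset_Yset])
  fix S i j assume "S \<subseteq> {..<n}" "i < n" "j < l"
  then have "edge_witness S i j (odd (card S)) \<in> Yset"
    using edge_witness(1)[of S i j "odd (card S)"] by (simp add: edge_witness_def in_Yset card_image)
  then show "\<exists>e. edge_witness S i j e \<in> Yset" ..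
qed

end

theorem lemma6p2:
  fixes n l :: nat
  assumes "n \<ge> 3" and "l \<ge> 1"
  defines "A \<equiv> groupA n l"
    and "a \<equiv> elem_a n l"
    and "x \<equiv> elem_x"
    and "z \<equiv> elem_z"
  defines "y \<equiv> a \<otimes>\<^bsub>A\<^esub> x"
  defines "H \<equiv> generate A {x, y}"
    and "J \<equiv> generate A {x, z}"
    and "X \<equiv> A\<lparr>carrier := generate A {a, z}\<rparr>"
    and "Y \<equiv> A\<lparr>carrier := generate A {a, z \<otimes>\<^bsub>A\<^esub> x}\<rparr>"
  shows "flag_regular_triple A x y z
    \<and> incgraph_iso (hypercube_mult n l) (cos_graph A H J)
    \<and> incgraph_iso (cos_graph A H J) (cos_graph X (generate A {a}) (generate A {z}))
    \<and> incgraph_iso (cos_graph A H J) (cos_graph Y (generate A {a}) (generate A {z \<otimes>\<^bsub>A\<^esub> x}))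
    \<and> valency_multiplicity (cos_graph A H J) n l"
proof -
  interpret C: cube_group n l using assms(1,2) by unfold_locales auto
  have a: "a = C.ea" and x: "x = C.ex" and z: "z = C.ez" and y: "y = C.ey" and zx: "z \<otimes>\<^bsub>A\<^esub> x = C.ezx"
    unfolding a_def x_def z_def y_def A_def C.elem_a_eq elem_x_def elem_z_def by (simp_all add: C.y_eq C.zx_eq)
  have H: "H = C.Hset" and J: "J = C.Jset"
    and X: "X = A\<lparr>carrier := C.Xset\<rparr>" and Y: "Y = A\<lparr>carrier := C.Yset\<rparr>"
    unfolding H_def J_def X_def Y_def zx unfolding a x y z A_def
    by (simp_all add: C.generate_x_y C.generate_x_z C.generate_a_z C.generate_a_zx)
  have ga: "generate A {a} = C.Hset \<inter> C.Xset" "generate A {a} = C.Hset \<inter> C.Yset"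
    unfolding a A_def by (simp_all add: C.generate_a C.Hset_Int_Xset_eq_Yset)
  have gz: "generate A {z} = C.Jset \<inter> C.Xset" and gzx: "generate A {z \<otimes>\<^bsub>A\<^esub> x} = C.Jset \<inter> C.Yset"
    unfolding zx unfolding z A_def by (simp_all add: C.generate_z C.generate_zx)
  have iso: "incgraph_iso (hypercube_mult n l) (cos_graph A H J)"
    unfolding H J A_def by (rule C.hypercube_iso_cos_graph_A)
  show ?thesis
  proof (intro conjI)
    show "flag_regular_triple A x y z" unfolding A_def x y z by (rule C.flag_regular_triple_A)
    show "incgraph_iso (hypercube_mult n l) (cos_graph A H J)" by (rule iso)
    show "incgraph_iso (cos_graph A H J) (cos_graph X (generate A {a}) (generate A {z}))"
      using incgraph_iso_trans[OF incgraph_iso_sym[OF iso] C.hypercube_iso_cos_graph_X]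
      unfolding X ga(1) gz unfolding A_def .
    show "incgraph_iso (cos_graph A H J) (cos_graph Y (generate A {a}) (generate A {z \<otimes>\<^bsub>A\<^esub> x}))"
      using incgraph_iso_trans[OF incgraph_iso_sym[OF iso] C.hypercube_iso_cos_graph_Y]
      unfolding Y ga(2) gzx unfolding A_def .
    show "valency_multiplicity (cos_graph A H J) n l"
      using valency_multiplicity_incgraph_iso[OF iso valency_multiplicity_hypercube_mult] C.l_pos .
  qed
qed

end
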